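(* Let $N$ be a positive even integer and $M_t,M_r$ positive integers, $K_{\min}=\min(M_t,M_r)$, $K_{\max}=\max(M_t,M_r)$, and $\theta\in\mathbb R$. Let $\hat{\mathbf G}\in\mathbb C^{N\times K_{\min}}$, $\hat{\mathbf G}_t'\in\mathbb C^{N\times(M_t-K_{\min})}$, $\hat{\mathbf G}_r'\in\mathbb C^{(M_r-K_{\min})\times N}$ be random matrices whose entries are all mutually independent circularly symmetric complex Gaussian with zero mean and unit variance, and set $\hat{\mathbf G}_t=[\hat{\mathbf G},\hat{\mathbf G}_t']\in\mathbb C^{N\times M_t}$ and $\hat{\mathbf G}_r=\begin{bmatrix}\hat{\mathbf G}^T\\ \hat{\mathbf G}_r'\end{bmatrix}\in\mathbb C^{M_r\times N}$. Let $\gamma_1^\star=\max_{\mathbf\Phi}\|\hat{\mathbf G}_t^T\mathbf\Phi^T\mathbf a(\theta)\|^2\|\hat{\mathbf G}_r\mathbf\Phi^T\mathbf a(\theta)\|^2$, the maximum over all $\mathbf\Phi=\mathrm{diag}(e^{j\phi_1},\dots,e^{j\phi_N})$ with $\phi_n\in\mathbb R$. Then $N^2\left(\frac{\pi(N-1)}{4}+K_{\min}\right)\left(\frac{\pi(N-1)}{4}+K_{\max}\right)\le\mathbb E[\gamma_1^\star]\le N^2\left(\left(M_t+M_r+\frac{1-3K_{\min}}{2}\right)K_{\min}N^2+2K_{\min}N\right).$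
   Context: $j=\sqrt{-1}$. Fix $\hat d>0$, $\lambda>0$; $\mathbf a(\theta)\in\mathbb C^N$ is the steering vector with $n$-th entry $e^{j\pi(2n-N-1)\hat d\sin\theta/\lambda}$, $n=1,\dots,N$. *)

theory Defs
  imports "HOL-Probability.Probability"
begin

text \<open>Circularly symmetric complex Gaussian, zero mean, unit variance:
  real and imaginary parts independent real normal with variance 1/2.\<close>
definition cgauss :: "complex measure" where
  "cgauss = distr
     (density lborel (normal_density 0 (sqrt (1/2))) \<Otimes>\<^sub>M density lborel (normal_density 0 (sqrt (1/2))))
     borel (\<lambda>(x, y). Complex x y)"

text \<open>Steering vector, 0-based index n (paper index n+1):
  entry exp(j pi (2(n+1) - N - 1) d sin theta / lambda).\<close>
definition steer :: "real \<Rightarrow> real \<Rightarrow> nat \<Rightarrow> real \<Rightarrow> nat \<Rightarrow> complex" where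
  "steer d lam N \<theta> n =
     exp (\<i> * complex_of_real (pi * (2 * (real n + 1) - real N - 1) * d * sin \<theta> / lam))"

text \<open>All random entries are packed in one function w :: nat \<times> nat \<times> nat \<Rightarrow> complex:
  w (0,n,k) = G(n,k) (n < N, k < Kmin), w (1,n,k) = G_t'(n,k) (k < Mt - Kmin),
  w (2,m,n) = G_r'(m,n) (m < Mr - Kmin).\<close>
definition chan_index :: "nat \<Rightarrow> nat \<Rightarrow> nat \<Rightarrow> (nat \<times> nat \<times> nat) set" where
  "chan_index N Mt Mr =
     ({0} \<times> {..<N} \<times> {..<min Mt Mr}) \<union>
     ({1} \<times> {..<N} \<times> {..<Mt - min Mt Mr}) \<union>
     ({2} \<times> {..<Mr - min Mt Mr} \<times> {..<N})"

definition chan_space :: "nat \<Rightarrow> nat \<Rightarrow> nat \<Rightarrow> (nat \<times> nat \<times> nat \<Rightarrow> complex) measure" where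
  "chan_space N Mt Mr = PiM (chan_index N Mt Mr) (\<lambda>_. cgauss)"

definition Gt :: "nat \<Rightarrow> (nat \<times> nat \<times> nat \<Rightarrow> complex) \<Rightarrow> nat \<Rightarrow> nat \<Rightarrow> complex" where
  "Gt K w n m = (if m < K then w (0, n, m) else w (1, n, m - K))"

definition Gr :: "nat \<Rightarrow> (nat \<times> nat \<times> nat \<Rightarrow> complex) \<Rightarrow> nat \<Rightarrow> nat \<Rightarrow> complex" where
  "Gr K w m n = (if m < K then w (0, n, m) else w (2, m - K, n))"

definition gain_obj ::
  "real \<Rightarrow> real \<Rightarrow> nat \<Rightarrow> nat \<Rightarrow> nat \<Rightarrow> real \<Rightarrow> (nat \<times> nat \<times> nat \<Rightarrow> complex) \<Rightarrow> (nat \<Rightarrow> real) \<Rightarrow> real" where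
  "gain_obj d lam N Mt Mr \<theta> w \<phi> =
     (let K = min Mt Mr; v = (\<lambda>n. exp (\<i> * complex_of_real (\<phi> n)) * steer d lam N \<theta> n) in
       (\<Sum>m<Mt. (cmod (\<Sum>n<N. Gt K w n m * v n))\<^sup>2) *
       (\<Sum>m<Mr. (cmod (\<Sum>n<N. Gr K w m n * v n))\<^sup>2))"

definition gamma1_star ::
  "real \<Rightarrow> real \<Rightarrow> nat \<Rightarrow> nat \<Rightarrow> nat \<Rightarrow> real \<Rightarrow> (nat \<times> nat \<times> nat \<Rightarrow> complex) \<Rightarrow> real" where
  "gamma1_star d lam N Mt Mr \<theta> w = (SUP \<phi>. gain_obj d lam N Mt Mr \<theta> w \<phi>)"

end

theory Submission
  imports Defs
begin

text \<open>
  For every choice of phases the objective is \<open>\<parallel>G\<^sub>t\<^sup>T v\<parallel>\<^sup>2 \<parallel>G\<^sub>r v\<parallel>\<^sup>2\<close> for a vector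
  \<open>v\<close> of unimodular weights, and every such \<open>v\<close> is realised by some phases; the steering
  vector matters only through its unimodularity.
  The first \<open>K = min Mt Mr\<close> columns of \<open>G\<^sub>t\<close> and of \<open>G\<^sub>r\<^sup>T\<close> are both the Gaussian
  matrix \<open>G\<close>, and one of the two remaining blocks is empty, so the objective has the form
  \<open>(X + Y) (X + Z)\<close> with \<open>Y Z = 0\<close>.

  Upper bound: by Cauchy-Schwarz, \<open>X\<close>, \<open>Y\<close>, \<open>Z\<close> are at most \<open>N\<close> times the energy of the
  corresponding columns, and \<open>X\<^sup>2\<close> is at most \<open>N\<^sup>2\<close> times the squared Frobenius norm of the
  Gram matrix of \<open>G\<close>. Their means follow from \<open>E |z|\<^sup>2 = 1\<close> and \<open>E |z|\<^sup>4 = 2\<close>.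

  Lower bound: choose the phases that co-phase the first column \<open>g\<close> of \<open>G\<close>. The first
  transmit and receive beam powers both become \<open>(\<Sum>n. |g\<^sub>n|)\<^sup>2\<close>, of mean
  \<open>N (1 + (N - 1) \<pi> / 4)\<close> as \<open>E |z| = \<surd>\<pi> / 2\<close>; every other beam power is a sum of \<open>N\<close>
  fresh Gaussians with unit weights, of mean \<open>N\<close>. Two beam powers are either equal or
  independent, hence positively correlated, and the mean of the product of the two total
  powers is at least the product of their means.
\<close>

section \<open>The standard complex Gaussian\<close>

lemma nn_integral_lborel_reflect:
  fixes g :: "real \<Rightarrow> ennreal"
  assumes [measurable]: "g \<in> borel_measurable borel"
  shows "(\<integral>\<^sup>+y. g (- y) \<partial>lborel) = (\<integral>\<^sup>+y. g y \<partial>lborel)"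
  using nn_integral_real_affine[of g "-1" 0] by simp

lemma nn_integral_power2_gaussian:
  assumes "0 < a"
  shows "(\<integral>\<^sup>+x. ennreal (x\<^sup>2 * exp (- (a * x\<^sup>2))) \<partial>lborel) = ennreal (sqrt pi / (2 * a * sqrt a))"
proof -
  define \<sigma> where "\<sigma> = 1 / sqrt (2 * a)"
  have \<sigma>: "0 < \<sigma>" "\<sigma>\<^sup>2 = 1 / (2 * a)"
    using assms by (simp_all add: \<sigma>_def power_divide)
  have "has_bochner_integral lborel (\<lambda>x. normal_density 0 \<sigma> x * x\<^sup>2 * sqrt (pi / a)) (\<sigma>\<^sup>2 * sqrt (pi / a))"
    using normal_moment_even[where k=1 and \<mu>=0 and \<sigma>=\<sigma>] \<sigma>
    by (intro has_bochner_integral_mult_left) (simp add: power_divide)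
  moreover have "normal_density 0 \<sigma> x * x\<^sup>2 * sqrt (pi / a) = x\<^sup>2 * exp (- (a * x\<^sup>2))" for x
    using assms \<sigma> by (simp add: normal_density_def)
  moreover have "\<sigma>\<^sup>2 * sqrt (pi / a) = sqrt pi / (2 * a * sqrt a)"
    using assms by (simp add: \<sigma> real_sqrt_divide)
  ultimately have "has_bochner_integral lborel (\<lambda>x. x\<^sup>2 * exp (- (a * x\<^sup>2))) (sqrt pi / (2 * a * sqrt a))"
    by simp
  then show ?thesis
    by (subst nn_integral_eq_integral) (auto dest: integrable.intros has_bochner_integral_integral_eq)
qed

lemma nn_integral_inverse_1_plus_square:
  "(\<integral>\<^sup>+s. ennreal (inverse (1 + s\<^sup>2)) \<partial>lborel) = ennreal pi"
proof -
  have "einterval (-\<infinity>) \<infinity> = UNIV"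
    by (auto simp: einterval_def)
  then have "integrable lborel (\<lambda>s::real. inverse (1 + s\<^sup>2))" "(\<integral>s. inverse (1 + s\<^sup>2) \<partial>lborel) = pi"
    using integrable_inverse_1_plus_square LBINT_inverse_1_plus_square
    by (simp_all add: set_integrable_def interval_lebesgue_integral_def set_lebesgue_integral_def)
  then show ?thesis
    by (subst nn_integral_eq_integral) simp_all
qed

lemma nn_integral_exp_norm_substitution:
  assumes "x \<noteq> 0"
  shows "(\<integral>\<^sup>+y. ennreal (exp (- x\<^sup>2 - y\<^sup>2) * sqrt (x\<^sup>2 + y\<^sup>2)) \<partial>lborel) =
    (\<integral>\<^sup>+s. ennreal (x\<^sup>2 * exp (- ((1 + s\<^sup>2) * x\<^sup>2)) * sqrt (1 + s\<^sup>2)) \<partial>lborel)"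
proof -
  have "(\<integral>\<^sup>+y. ennreal (exp (- x\<^sup>2 - y\<^sup>2) * sqrt (x\<^sup>2 + y\<^sup>2)) \<partial>lborel) =
      ennreal \<bar>x\<bar> * (\<integral>\<^sup>+s. ennreal (exp (- x\<^sup>2 - (0 + x * s)\<^sup>2) * sqrt (x\<^sup>2 + (0 + x * s)\<^sup>2)) \<partial>lborel)"
    using assms by (intro nn_integral_real_affine) auto
  also have "\<dots> = (\<integral>\<^sup>+s. ennreal (\<bar>x\<bar> * (exp (- x\<^sup>2 - (x * s)\<^sup>2) * sqrt (x\<^sup>2 + (x * s)\<^sup>2))) \<partial>lborel)"
    by (simp add: nn_integral_cmult[symmetric] ennreal_mult')
  also have "\<dots> = (\<integral>\<^sup>+s. ennreal (x\<^sup>2 * exp (- ((1 + s\<^sup>2) * x\<^sup>2)) * sqrt (1 + s\<^sup>2)) \<partial>lborel)"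
  proof (intro nn_integral_cong arg_cong[where f=ennreal])
    fix s
    have "x\<^sup>2 + (x * s)\<^sup>2 = x\<^sup>2 * (1 + s\<^sup>2)"
      by (simp add: algebra_simps power_mult_distrib)
    then have "sqrt (x\<^sup>2 + (x * s)\<^sup>2) = \<bar>x\<bar> * sqrt (1 + s\<^sup>2)"
      by (simp add: real_sqrt_mult)
    moreover have "exp (- x\<^sup>2 - (x * s)\<^sup>2) = exp (- ((1 + s\<^sup>2) * x\<^sup>2))"
      by (simp add: power_mult_distrib algebra_simps)
    ultimately show "\<bar>x\<bar> * (exp (- x\<^sup>2 - (x * s)\<^sup>2) * sqrt (x\<^sup>2 + (x * s)\<^sup>2)) =
        x\<^sup>2 * exp (- ((1 + s\<^sup>2) * x\<^sup>2)) * sqrt (1 + s\<^sup>2)"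
      by (simp add: power2_eq_square abs_mult_self_eq)
  qed
  finally show ?thesis .
qed

text \<open>Substituting \<open>y = x s\<close> turns the inner integral into a Gaussian second moment in \<open>x\<close>
  with parameter \<open>1 + s\<^sup>2\<close>; after exchanging the integrals only the Cauchy density remains.\<close>
lemma nn_integral_exp_norm_plane:
  "(\<integral>\<^sup>+x. \<integral>\<^sup>+y. ennreal (exp (- x\<^sup>2 - y\<^sup>2) * sqrt (x\<^sup>2 + y\<^sup>2)) \<partial>lborel \<partial>lborel) = ennreal (pi * sqrt pi / 2)"
proof -
  have "(\<integral>\<^sup>+x. \<integral>\<^sup>+y. ennreal (exp (- x\<^sup>2 - y\<^sup>2) * sqrt (x\<^sup>2 + y\<^sup>2)) \<partial>lborel \<partial>lborel) =
      (\<integral>\<^sup>+x. \<integral>\<^sup>+s. ennreal (x\<^sup>2 * exp (- ((1 + s\<^sup>2) * x\<^sup>2)) * sqrt (1 + s\<^sup>2)) \<partial>lborel \<partial>lborel)"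
    by (intro nn_integral_cong_AE AE_mp[OF AE_lborel_singleton[of 0] AE_I2] impI nn_integral_exp_norm_substitution)
  also have "\<dots> = (\<integral>\<^sup>+s. \<integral>\<^sup>+x. ennreal (x\<^sup>2 * exp (- ((1 + s\<^sup>2) * x\<^sup>2)) * sqrt (1 + s\<^sup>2)) \<partial>lborel \<partial>lborel)"
    by (rule lborel_pair.Fubini') simp
  also have "\<dots> = (\<integral>\<^sup>+s. ennreal (sqrt pi / 2) * ennreal (inverse (1 + s\<^sup>2)) \<partial>lborel)"
  proof (rule nn_integral_cong)
    fix s :: real
    have a: "0 < 1 + s\<^sup>2"
      by (simp add: add_pos_nonneg)
    have "(\<integral>\<^sup>+x. ennreal (x\<^sup>2 * exp (- ((1 + s\<^sup>2) * x\<^sup>2)) * sqrt (1 + s\<^sup>2)) \<partial>lborel) =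
        ennreal (sqrt pi / (2 * (1 + s\<^sup>2) * sqrt (1 + s\<^sup>2))) * ennreal (sqrt (1 + s\<^sup>2))"
      by (subst ennreal_mult'', simp, subst nn_integral_multc, simp_all add: nn_integral_power2_gaussian[OF a])
    also have "\<dots> = ennreal (sqrt pi / (2 * (1 + s\<^sup>2) * sqrt (1 + s\<^sup>2)) * sqrt (1 + s\<^sup>2))"
      by (rule ennreal_mult[symmetric]) simp_all
    also have "sqrt pi / (2 * (1 + s\<^sup>2) * sqrt (1 + s\<^sup>2)) * sqrt (1 + s\<^sup>2) = sqrt pi / 2 * inverse (1 + s\<^sup>2)"
    proof -
      have "p / (2 * b * q) * q = p / 2 * inverse b" if "0 < q" "0 < b" for p q b :: real
        using that by (simp add: field_simps)
      from this[where p = "sqrt pi" and q = "sqrt (1 + s\<^sup>2)" and b = "1 + s\<^sup>2"] show ?thesis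
        using a by simp
    qed
    also have "ennreal (sqrt pi / 2 * inverse (1 + s\<^sup>2)) = ennreal (sqrt pi / 2) * ennreal (inverse (1 + s\<^sup>2))"
      by (rule ennreal_mult) simp_all
    finally show "(\<integral>\<^sup>+x. ennreal (x\<^sup>2 * exp (- ((1 + s\<^sup>2) * x\<^sup>2)) * sqrt (1 + s\<^sup>2)) \<partial>lborel) =
        ennreal (sqrt pi / 2) * ennreal (inverse (1 + s\<^sup>2))" .
  qed
  also have "\<dots> = ennreal (sqrt pi / 2) * ennreal pi"
    by (subst nn_integral_cmult) (simp_all add: nn_integral_inverse_1_plus_square)
  also have "\<dots> = ennreal (pi * sqrt pi / 2)"
    by (simp add: mult.commute flip: ennreal_mult)
  finally show ?thesis .
qed

abbreviation re_im_density :: "real \<Rightarrow> real" where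
  "re_im_density \<equiv> normal_density 0 (sqrt (1/2))"

lemma re_im_density_eq: "re_im_density x = exp (- x\<^sup>2) / sqrt pi"
  by (simp add: normal_density_def real_sqrt_divide power_divide)

lemma re_im_density_uminus [simp]: "re_im_density (- x) = re_im_density x"
  by (simp add: normal_density_def)

lemma measurable_Complex [measurable]:
  "(\<lambda>(x, y). Complex x y) \<in> borel_measurable (borel \<Otimes>\<^sub>M borel)"
proof -
  have "(\<lambda>(x, y). Complex x y) = (\<lambda>p. complex_of_real (fst p) + \<i> * complex_of_real (snd p))"
    by (auto simp: fun_eq_iff complex_eq_iff)
  then show ?thesis by simp
qed

lemma borel_measurable_cnj [measurable]:
  assumes [measurable]: "f \<in> borel_measurable M"
  shows "(\<lambda>x. cnj (f x)) \<in> borel_measurable M"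
proof -
  have "(\<lambda>x. cnj (f x)) = (\<lambda>x. complex_of_real (Re (f x)) - \<i> * complex_of_real (Im (f x)))"
    by (auto simp: complex_eq_iff)
  then show ?thesis by simp
qed

lemma sets_cgauss [simp, measurable_cong]: "sets cgauss = sets borel"
  by (simp add: cgauss_def)

lemma space_cgauss [simp]: "space cgauss = UNIV"
  by (simp add: cgauss_def)

lemma measurable_cgauss [simp]: "measurable cgauss N = measurable borel N"
  by (rule measurable_cong_sets) simp_all

interpretation re_im: prob_space "density lborel (\<lambda>x. ennreal (re_im_density x))"
  by (rule prob_space_normal_density) simp

interpretation cgauss: prob_space cgauss
proof -
  interpret pair_prob_space "density lborel (\<lambda>x. ennreal (re_im_density x))"
    "density lborel (\<lambda>x. ennreal (re_im_density x))" ..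
  show "prob_space cgauss"
    unfolding cgauss_def by (rule prob_space_distr) simp
qed

lemma emeasure_cgauss_UNIV [simp]: "emeasure cgauss UNIV = 1"
  using cgauss.emeasure_space_1 by simp

lemma nn_integral_cgauss:
  assumes [measurable]: "f \<in> borel_measurable borel"
  shows "(\<integral>\<^sup>+z. f z \<partial>cgauss) =
    (\<integral>\<^sup>+x. \<integral>\<^sup>+y. ennreal (re_im_density x) * ennreal (re_im_density y) * f (Complex x y) \<partial>lborel \<partial>lborel)"
proof -
  have "(\<integral>\<^sup>+z. f z \<partial>cgauss) =
      (\<integral>\<^sup>+p. f (case p of (x, y) \<Rightarrow> Complex x y) \<partial>density lborel re_im_density \<Otimes>\<^sub>M density lborel re_im_density)"
    unfolding cgauss_def by (subst nn_integral_distr) auto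
  also have "\<dots> = (\<integral>\<^sup>+x. \<integral>\<^sup>+y. f (Complex x y) \<partial>density lborel re_im_density \<partial>density lborel re_im_density)"
    by (subst re_im.nn_integral_fst[symmetric]) auto
  also have "\<dots> = (\<integral>\<^sup>+x. \<integral>\<^sup>+y. ennreal (re_im_density x) * (ennreal (re_im_density y) * f (Complex x y))
      \<partial>lborel \<partial>lborel)"
    by (subst nn_integral_density; simp add: nn_integral_density nn_integral_cmult[symmetric])
  finally show ?thesis by (simp add: mult.assoc)
qed

lemma nn_integral_re_im_density_even_poly:
  assumes "0 \<le> a" "0 \<le> b" "0 \<le> c"
  shows "(\<integral>\<^sup>+y. ennreal (re_im_density y * (a + b * y\<^sup>2 + c * y ^ 4)) \<partial>lborel) = ennreal (a + b / 2 + 3 * c / 4)"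
proof -
  have "has_bochner_integral lborel (\<lambda>x. re_im_density x * (x - 0) ^ (2 * k)) (fact (2 * k) / (2 ^ (2 * k) * fact k))"
    for k :: nat
    using normal_moment_even[where k=k and \<mu>=0 and \<sigma>="sqrt (1/2)"]
    by (simp add: power_mult power_divide)
  from this[of 0] this[of 1] this[of 2]
  have "has_bochner_integral lborel (\<lambda>y. re_im_density y * a + re_im_density y * y\<^sup>2 * b + re_im_density y * y ^ 4 * c)
      (1 * a + 1/2 * b + 3/4 * c)"
    by (intro has_bochner_integral_add has_bochner_integral_mult_left) (simp_all add: fact_numeral)
  then have "has_bochner_integral lborel (\<lambda>y. re_im_density y * (a + b * y\<^sup>2 + c * y ^ 4)) (a + b / 2 + 3 * c / 4)"
    by (simp add: algebra_simps)
  with assms show ?thesis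
    by (subst nn_integral_eq_integral) (auto dest: integrable.intros has_bochner_integral_integral_eq)
qed

lemma nn_integral_cgauss_norm_power2: "(\<integral>\<^sup>+z. ennreal ((cmod z)\<^sup>2) \<partial>cgauss) = 1"
proof -
  have "(\<integral>\<^sup>+z. ennreal ((cmod z)\<^sup>2) \<partial>cgauss) =
      (\<integral>\<^sup>+x. \<integral>\<^sup>+y. ennreal (re_im_density x) * ennreal (re_im_density y * (x\<^sup>2 + 1 * y\<^sup>2 + 0 * y ^ 4))
        \<partial>lborel \<partial>lborel)"
    by (subst nn_integral_cgauss)
      (auto simp: cmod_power2 ennreal_mult[symmetric] mult.assoc simp del: ennreal_plus intro!: nn_integral_cong)
  also have "\<dots> = (\<integral>\<^sup>+x. ennreal (re_im_density x * (1/2 + 1 * x\<^sup>2 + 0 * x ^ 4)) \<partial>lborel)"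
    by (intro nn_integral_cong, subst nn_integral_cmult, simp, subst nn_integral_re_im_density_even_poly)
      (auto simp: ennreal_mult[symmetric] algebra_simps simp del: ennreal_plus)
  also have "\<dots> = 1"
    by (subst nn_integral_re_im_density_even_poly) auto
  finally show ?thesis .
qed

lemma nn_integral_cgauss_norm_power4: "(\<integral>\<^sup>+z. ennreal ((cmod z) ^ 4) \<partial>cgauss) = 2"
proof -
  have norm4: "(cmod (Complex x y)) ^ 4 = x ^ 4 + (2 * x\<^sup>2) * y\<^sup>2 + 1 * y ^ 4" for x y
  proof -
    have "(cmod (Complex x y)) ^ 4 = ((cmod (Complex x y))\<^sup>2)\<^sup>2" by simp
    also have "\<dots> = (x\<^sup>2 + y\<^sup>2)\<^sup>2" by (simp add: cmod_power2)
    finally show ?thesis by (simp add: power2_eq_square power4_eq_xxxx algebra_simps)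
  qed
  have "(\<integral>\<^sup>+z. ennreal ((cmod z) ^ 4) \<partial>cgauss) =
      (\<integral>\<^sup>+x. \<integral>\<^sup>+y. ennreal (re_im_density x) * ennreal (re_im_density y * (x ^ 4 + (2 * x\<^sup>2) * y\<^sup>2 + 1 * y ^ 4))
        \<partial>lborel \<partial>lborel)"
    by (subst nn_integral_cgauss)
      (auto simp: norm4 ennreal_mult[symmetric] mult.assoc simp del: ennreal_plus intro!: nn_integral_cong)
  also have "\<dots> = (\<integral>\<^sup>+x. ennreal (re_im_density x * (3/4 + 1 * x\<^sup>2 + 1 * x ^ 4)) \<partial>lborel)"
    by (intro nn_integral_cong, subst nn_integral_cmult, simp, subst nn_integral_re_im_density_even_poly)
      (auto simp: ennreal_mult[symmetric] algebra_simps simp del: ennreal_plus)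
  also have "\<dots> = 2"
    by (subst nn_integral_re_im_density_even_poly) auto
  finally show ?thesis .
qed

lemma nn_integral_cgauss_uminus:
  assumes [measurable]: "f \<in> borel_measurable borel"
  shows "(\<integral>\<^sup>+z. f (- z) \<partial>cgauss) = (\<integral>\<^sup>+z. f z \<partial>cgauss)"
proof -
  have "- Complex x y = Complex (- x) (- y)" for x y
    by (simp add: complex_eq_iff)
  then have "(\<integral>\<^sup>+z. f (- z) \<partial>cgauss) =
      (\<integral>\<^sup>+x. \<integral>\<^sup>+y. ennreal (re_im_density x) * ennreal (re_im_density y) * f (Complex (- x) (- y)) \<partial>lborel \<partial>lborel)"
    by (subst nn_integral_cgauss) auto
  also have "\<dots> = (\<integral>\<^sup>+x. \<integral>\<^sup>+y. ennreal (re_im_density x) * ennreal (re_im_density y) * f (Complex x y) \<partial>lborel \<partial>lborel)"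
    by (subst (2 3) nn_integral_lborel_reflect[symmetric]) (auto intro!: nn_integral_cong)
  finally show ?thesis
    by (simp add: nn_integral_cgauss)
qed

text \<open>By the symmetry of \<open>cgauss\<close> the cross term of the parallelogram law
  \<open>|a + c z|\<^sup>2 + |a - c z|\<^sup>2 = 2 |a|\<^sup>2 + 2 |c|\<^sup>2 |z|\<^sup>2\<close> integrates to zero.\<close>
lemma nn_integral_cgauss_affine_norm_power2:
  "(\<integral>\<^sup>+z. ennreal ((cmod (a + c * z))\<^sup>2) \<partial>cgauss) = ennreal ((cmod a)\<^sup>2 + (cmod c)\<^sup>2)"
proof -
  let ?F = "\<lambda>z. ennreal ((cmod (a + c * z))\<^sup>2)"
  have "(cmod (a + c * z))\<^sup>2 + (cmod (a + c * - z))\<^sup>2 = 2 * (cmod a)\<^sup>2 + 2 * (cmod c)\<^sup>2 * (cmod z)\<^sup>2" for z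
    unfolding cmod_power2 by (simp add: power2_eq_square algebra_simps)
  then have parallelogram:
    "?F z + ?F (- z) = ennreal (2 * (cmod a)\<^sup>2) + ennreal (2 * (cmod c)\<^sup>2) * ennreal ((cmod z)\<^sup>2)" for z
    by (simp add: ennreal_mult[symmetric] flip: ennreal_plus)
  have "2 * (\<integral>\<^sup>+z. ?F z \<partial>cgauss) = (\<integral>\<^sup>+z. ?F z \<partial>cgauss) + (\<integral>\<^sup>+z. ?F (- z) \<partial>cgauss)"
    by (subst nn_integral_cgauss_uminus) (auto simp: mult_2)
  also have "\<dots> = (\<integral>\<^sup>+z. ?F z + ?F (- z) \<partial>cgauss)"
    by (rule nn_integral_add[symmetric]) auto
  also have "\<dots> = (\<integral>\<^sup>+z. ennreal (2 * (cmod a)\<^sup>2) + ennreal (2 * (cmod c)\<^sup>2) * ennreal ((cmod z)\<^sup>2) \<partial>cgauss)"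
    by (simp only: parallelogram)
  also have "\<dots> = ennreal (2 * (cmod a)\<^sup>2) + ennreal (2 * (cmod c)\<^sup>2)"
    by (subst nn_integral_add) (auto simp: nn_integral_cmult nn_integral_cgauss_norm_power2)
  also have "\<dots> = 2 * ennreal ((cmod a)\<^sup>2 + (cmod c)\<^sup>2)"
    by (simp add: ennreal_mult distrib_left)
  finally show ?thesis
    by (subst (asm) ennreal_mult_cancel_left) auto
qed

lemma nn_integral_cgauss_norm: "(\<integral>\<^sup>+z. ennreal (cmod z) \<partial>cgauss) = ennreal (sqrt pi / 2)"
proof -
  have "re_im_density x * re_im_density y = exp (- x\<^sup>2 - y\<^sup>2) / pi" for x y
  proof -
    have "exp (- x\<^sup>2 - y\<^sup>2) = exp (- x\<^sup>2) * exp (- y\<^sup>2)"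
      by (simp add: exp_diff exp_minus field_simps)
    then show ?thesis
      by (simp add: re_im_density_eq)
  qed
  then have "ennreal (re_im_density x) * ennreal (re_im_density y) * ennreal (cmod (Complex x y)) =
      ennreal (1 / pi) * ennreal (exp (- x\<^sup>2 - y\<^sup>2) * sqrt (x\<^sup>2 + y\<^sup>2))" for x y
    by (simp add: cmod_def flip: ennreal_mult)
  then have "(\<integral>\<^sup>+z. ennreal (cmod z) \<partial>cgauss) = ennreal (1 / pi) * ennreal (pi * sqrt pi / 2)"
    by (simp add: nn_integral_cgauss nn_integral_cmult nn_integral_exp_norm_plane)
  also have "\<dots> = ennreal (sqrt pi / 2)"
    by (simp flip: ennreal_mult)
  finally show ?thesis .
qed

section \<open>Independent complex Gaussian coordinates\<close>

lemma (in prob_space) power2_nn_integral_le: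
  assumes "f \<in> borel_measurable M"
  shows "(\<integral>\<^sup>+x. f x \<partial>M)\<^sup>2 \<le> (\<integral>\<^sup>+x. f x ^ 2 \<partial>M)"
  using Cauchy_Schwarz_nn_integral[OF assms, of "\<lambda>_. 1"] by (simp add: emeasure_space_1)

lemma (in prob_space) nn_integral_PiM_split_coordinate:
  fixes F :: "('i \<Rightarrow> 'a) \<times> 'a \<Rightarrow> ennreal"
  assumes "finite I" "i \<in> I"
    and F [measurable]: "F \<in> borel_measurable (PiM I (\<lambda>_. M) \<Otimes>\<^sub>M M)"
    and indep: "\<And>w w' z. (\<And>j. j \<noteq> i \<Longrightarrow> w j = w' j) \<Longrightarrow> F (w, z) = F (w', z)"
  shows "(\<integral>\<^sup>+w. F (w, w i) \<partial>PiM I (\<lambda>_. M)) = (\<integral>\<^sup>+w. \<integral>\<^sup>+z. F (w, z) \<partial>M \<partial>PiM I (\<lambda>_. M))"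
proof -
  interpret product_sigma_finite "\<lambda>_. M"
    by (simp add: product_sigma_finite_def sigma_finite_measure)
  define J where "J = I - {i}"
  have I: "I = insert i J" "i \<notin> J" "finite J"
    using assms(1,2) by (auto simp: J_def)
  have "(\<lambda>w. (w, w i)) \<in> measurable (PiM I (\<lambda>_. M)) (PiM I (\<lambda>_. M) \<Otimes>\<^sub>M M)"
    using assms(2) by measurable
  then have [measurable]: "(\<lambda>w. F (w, w i)) \<in> borel_measurable (PiM (insert i J) (\<lambda>_. M))"
    unfolding I(1)[symmetric] by measurable
  have [measurable]: "(\<lambda>w. \<integral>\<^sup>+z. F (w, z) \<partial>M) \<in> borel_measurable (PiM (insert i J) (\<lambda>_. M))"
    unfolding I(1)[symmetric] by (rule borel_measurable_nn_integral) simp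
  have "(\<integral>\<^sup>+w. F (w, w i) \<partial>PiM I (\<lambda>_. M)) = (\<integral>\<^sup>+x. \<integral>\<^sup>+y. F (x(i := y), y) \<partial>M \<partial>PiM J (\<lambda>_. M))"
    unfolding I(1) by (subst product_nn_integral_insert) (use I in simp_all)
  also have "\<dots> = (\<integral>\<^sup>+x. \<integral>\<^sup>+y. \<integral>\<^sup>+z. F (x(i := y), z) \<partial>M \<partial>M \<partial>PiM J (\<lambda>_. M))"
  proof (rule nn_integral_cong)
    fix x
    define G where "G z = F (x(i := undefined), z)" for z
    have "F (x(i := y), z) = G z" for y z
      unfolding G_def by (rule indep) simp
    then show "(\<integral>\<^sup>+y. F (x(i := y), y) \<partial>M) = (\<integral>\<^sup>+y. \<integral>\<^sup>+z. F (x(i := y), z) \<partial>M \<partial>M)"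
      by (simp add: emeasure_space_1)
  qed
  also have "\<dots> = (\<integral>\<^sup>+w. \<integral>\<^sup>+z. F (w, z) \<partial>M \<partial>PiM I (\<lambda>_. M))"
    unfolding I(1) by (subst product_nn_integral_insert) (use I in simp_all)
  finally show ?thesis .
qed

lemma (in prob_space) nn_integral_PiM_mult_coordinate:
  fixes h :: "('i \<Rightarrow> 'a) \<Rightarrow> ennreal" and f :: "'a \<Rightarrow> ennreal"
  assumes "finite I" "i \<in> I"
    and [measurable]: "h \<in> borel_measurable (PiM I (\<lambda>_. M))" "f \<in> borel_measurable M"
    and indep: "\<And>w w'. (\<And>j. j \<noteq> i \<Longrightarrow> w j = w' j) \<Longrightarrow> h w = h w'"
  shows "(\<integral>\<^sup>+w. h w * f (w i) \<partial>PiM I (\<lambda>_. M)) = (\<integral>\<^sup>+w. h w \<partial>PiM I (\<lambda>_. M)) * (\<integral>\<^sup>+z. f z \<partial>M)"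
proof -
  let ?F = "\<lambda>(w, z). h w * f z"
  have "(\<integral>\<^sup>+w. ?F (w, w i) \<partial>PiM I (\<lambda>_. M)) = (\<integral>\<^sup>+w. \<integral>\<^sup>+z. ?F (w, z) \<partial>M \<partial>PiM I (\<lambda>_. M))"
  proof (rule nn_integral_PiM_split_coordinate[OF assms(1,2)])
    fix w w' :: "'i \<Rightarrow> 'a" and z
    assume "\<And>j. j \<noteq> i \<Longrightarrow> w j = w' j"
    then have "h w = h w'"
      by (rule indep)
    then show "?F (w, z) = ?F (w', z)"
      by simp
  qed measurable
  then have "(\<integral>\<^sup>+w. h w * f (w i) \<partial>PiM I (\<lambda>_. M)) = (\<integral>\<^sup>+w. \<integral>\<^sup>+z. h w * f z \<partial>M \<partial>PiM I (\<lambda>_. M))"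
    by simp
  also have "\<dots> = (\<integral>\<^sup>+w. h w * (\<integral>\<^sup>+z. f z \<partial>M) \<partial>PiM I (\<lambda>_. M))"
    by (simp add: nn_integral_cmult)
  finally show ?thesis
    by (simp add: nn_integral_multc)
qed

lemma measurable_PiM_cgauss_component [measurable]:
  "(\<lambda>w. w j) \<in> borel_measurable (PiM I (\<lambda>_. cgauss))"
proof (cases "j \<in> I")
  case True
  have "measurable (PiM I (\<lambda>_. cgauss)) cgauss = borel_measurable (PiM I (\<lambda>_. cgauss))"
    by (rule measurable_cong_sets) simp_all
  then show ?thesis
    using measurable_component_singleton[OF True, of "\<lambda>_. cgauss"] by simp
next
  case False
  then have "w j = undefined" if "w \<in> space (PiM I (\<lambda>_. cgauss))" for w
    using that by (auto simp: space_PiM PiE_def extensional_def)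
  then show ?thesis
    using measurable_cong[of "PiM I (\<lambda>_. cgauss)" "\<lambda>w. w j" "\<lambda>_. undefined" borel] by auto
qed

lemma prob_space_PiM_cgauss: "prob_space (PiM I (\<lambda>_. cgauss))"
  by (simp add: prob_space_PiM cgauss.prob_space_axioms)

lemma emeasure_PiM_cgauss_space [simp]: "emeasure (PiM I (\<lambda>_. cgauss)) (space (PiM I (\<lambda>_. cgauss))) = 1"
  by (rule prob_space.emeasure_space_1[OF prob_space_PiM_cgauss])

lemma nn_integral_sum_ennreal:
  assumes "finite S" "\<And>i. i \<in> S \<Longrightarrow> f i \<in> borel_measurable M" "\<And>i w. i \<in> S \<Longrightarrow> 0 \<le> f i w"
  shows "(\<integral>\<^sup>+w. ennreal (\<Sum>i\<in>S. f i w) \<partial>M) = (\<Sum>i\<in>S. \<integral>\<^sup>+w. ennreal (f i w) \<partial>M)"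
  using assms by (simp add: nn_integral_sum flip: sum_ennreal)

lemma nn_integral_PiM_cgauss_mult_norm_power2:
  fixes h :: "('i \<Rightarrow> complex) \<Rightarrow> real"
  assumes "finite I" "i \<in> I"
    and [measurable]: "h \<in> borel_measurable (PiM I (\<lambda>_. cgauss))" and "\<And>w. 0 \<le> h w"
    and indep: "\<And>w w'. (\<And>j. j \<noteq> i \<Longrightarrow> w j = w' j) \<Longrightarrow> h w = h w'"
  shows "(\<integral>\<^sup>+w. ennreal (h w * (cmod (w i))\<^sup>2) \<partial>PiM I (\<lambda>_. cgauss)) = (\<integral>\<^sup>+w. ennreal (h w) \<partial>PiM I (\<lambda>_. cgauss))"
proof -
  have "(\<integral>\<^sup>+w. ennreal (h w * (cmod (w i))\<^sup>2) \<partial>PiM I (\<lambda>_. cgauss)) =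
      (\<integral>\<^sup>+w. ennreal (h w) * ennreal ((cmod (w i))\<^sup>2) \<partial>PiM I (\<lambda>_. cgauss))"
    using assms(4) by (simp add: ennreal_mult)
  also have "\<dots> = (\<integral>\<^sup>+w. ennreal (h w) \<partial>PiM I (\<lambda>_. cgauss)) * (\<integral>\<^sup>+z. ennreal ((cmod z)\<^sup>2) \<partial>cgauss)"
  proof (rule cgauss.nn_integral_PiM_mult_coordinate[OF assms(1,2)])
    fix w w' :: "'i \<Rightarrow> complex"
    assume "\<And>j. j \<noteq> i \<Longrightarrow> w j = w' j"
    then have "h w = h w'"
      by (rule indep)
    then show "ennreal (h w) = ennreal (h w')"
      by simp
  qed simp_all
  finally show ?thesis
    by (simp add: nn_integral_cgauss_norm_power2)
qed

lemma nn_integral_PiM_cgauss_norm_power2: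
  assumes "finite I" "i \<in> I"
  shows "(\<integral>\<^sup>+w. ennreal ((cmod (w i))\<^sup>2) \<partial>PiM I (\<lambda>_. cgauss)) = 1"
  using nn_integral_PiM_cgauss_mult_norm_power2[OF assms, of "\<lambda>_. 1"]
  by (simp add: prob_space.emeasure_space_1 prob_space_PiM cgauss.prob_space_axioms)

lemma nn_integral_PiM_cgauss_mult_sum_norm_power2:
  fixes h :: "('i \<Rightarrow> complex) \<Rightarrow> real" and \<kappa> :: "'b \<Rightarrow> 'i"
  assumes "finite I" "finite S" "\<kappa> ` S \<subseteq> I"
    and [measurable]: "h \<in> borel_measurable (PiM I (\<lambda>_. cgauss))" and "\<And>w. 0 \<le> h w"
    and indep: "\<And>s w w'. s \<in> S \<Longrightarrow> (\<And>j. j \<noteq> \<kappa> s \<Longrightarrow> w j = w' j) \<Longrightarrow> h w = h w'"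
  shows "(\<integral>\<^sup>+w. ennreal (h w * (\<Sum>s\<in>S. (cmod (w (\<kappa> s)))\<^sup>2)) \<partial>PiM I (\<lambda>_. cgauss)) =
    of_nat (card S) * (\<integral>\<^sup>+w. ennreal (h w) \<partial>PiM I (\<lambda>_. cgauss))"
proof -
  have "(\<integral>\<^sup>+w. ennreal (h w * (\<Sum>s\<in>S. (cmod (w (\<kappa> s)))\<^sup>2)) \<partial>PiM I (\<lambda>_. cgauss)) =
      (\<Sum>s\<in>S. \<integral>\<^sup>+w. ennreal (h w * (cmod (w (\<kappa> s)))\<^sup>2) \<partial>PiM I (\<lambda>_. cgauss))"
    unfolding sum_distrib_left using assms(2,5) by (intro nn_integral_sum_ennreal) auto
  also have "\<dots> = (\<Sum>s\<in>S. \<integral>\<^sup>+w. ennreal (h w) \<partial>PiM I (\<lambda>_. cgauss))"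
  proof (intro sum.cong refl nn_integral_PiM_cgauss_mult_norm_power2 assms(1,4,5))
    fix s and w w' :: "'i \<Rightarrow> complex"
    assume "s \<in> S" "\<And>j. j \<noteq> \<kappa> s \<Longrightarrow> w j = w' j"
    then show "h w = h w'"
      by (rule indep)
  qed (use assms(3) in auto)
  finally show ?thesis
    by simp
qed

lemma nn_integral_PiM_cgauss_norm_power2_mult:
  assumes "finite I" "i \<in> I" "j \<in> I"
  shows "(\<integral>\<^sup>+w. ennreal ((cmod (w i))\<^sup>2 * (cmod (w j))\<^sup>2) \<partial>PiM I (\<lambda>_. cgauss)) = (if i = j then 2 else 1)"
proof (cases "i = j")
  case True
  have "(\<integral>\<^sup>+w. ennreal ((cmod (w i))\<^sup>2 * (cmod (w i))\<^sup>2) \<partial>PiM I (\<lambda>_. cgauss)) =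
      (\<integral>\<^sup>+w. 1 * ennreal ((cmod (w i)) ^ 4) \<partial>PiM I (\<lambda>_. cgauss))"
    by (simp flip: power_add)
  also have "\<dots> = (\<integral>\<^sup>+w. 1 \<partial>PiM I (\<lambda>_. cgauss)) * (\<integral>\<^sup>+z. ennreal ((cmod z) ^ 4) \<partial>cgauss)"
    by (rule cgauss.nn_integral_PiM_mult_coordinate[OF assms(1,2)]) simp_all
  finally show ?thesis
    using True by (simp add: nn_integral_cgauss_norm_power4)
next
  case False
  then have "(\<integral>\<^sup>+w. ennreal ((cmod (w j))\<^sup>2 * (cmod (w i))\<^sup>2) \<partial>PiM I (\<lambda>_. cgauss)) =
      (\<integral>\<^sup>+w. ennreal ((cmod (w j))\<^sup>2) \<partial>PiM I (\<lambda>_. cgauss))"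
    by (intro nn_integral_PiM_cgauss_mult_norm_power2 assms) auto
  with False show ?thesis
    by (simp add: mult.commute nn_integral_PiM_cgauss_norm_power2 assms)
qed

lemma nn_integral_PiM_cgauss_norm_mult:
  assumes "finite I" "i \<in> I" "j \<in> I"
  shows "(\<integral>\<^sup>+w. ennreal (cmod (w i) * cmod (w j)) \<partial>PiM I (\<lambda>_. cgauss)) = (if i = j then 1 else pi / 4)"
proof (cases "i = j")
  case True
  then show ?thesis
    using nn_integral_PiM_cgauss_norm_power2[OF assms(1,2)] by (simp add: power2_eq_square)
next
  case False
  have norm: "(\<integral>\<^sup>+w. ennreal (cmod (w j)) \<partial>PiM I (\<lambda>_. cgauss)) = ennreal (sqrt pi / 2)"
    using cgauss.nn_integral_PiM_mult_coordinate[OF assms(1,3), of "\<lambda>_. 1" "\<lambda>z. ennreal (cmod z)"]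
    by (simp add: nn_integral_cgauss_norm)
  have "(\<integral>\<^sup>+w. ennreal (cmod (w j)) * ennreal (cmod (w i)) \<partial>PiM I (\<lambda>_. cgauss)) =
      (\<integral>\<^sup>+w. ennreal (cmod (w j)) \<partial>PiM I (\<lambda>_. cgauss)) * (\<integral>\<^sup>+z. ennreal (cmod z) \<partial>cgauss)"
    using False by (intro cgauss.nn_integral_PiM_mult_coordinate assms) auto
  also have "\<dots> = ennreal (pi / 4)"
    by (simp add: norm nn_integral_cgauss_norm flip: ennreal_mult)
  finally show ?thesis
    using False by (simp add: ennreal_mult mult.commute)
qed

lemma nn_integral_PiM_cgauss_affine_coordinate:
  fixes h :: "('i \<Rightarrow> complex) \<Rightarrow> ennreal" and a c :: "('i \<Rightarrow> complex) \<Rightarrow> complex"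
  assumes "finite I" "i \<in> I"
    and [measurable]: "h \<in> borel_measurable (PiM I (\<lambda>_. cgauss))"
      "a \<in> borel_measurable (PiM I (\<lambda>_. cgauss))" "c \<in> borel_measurable (PiM I (\<lambda>_. cgauss))"
    and indep: "\<And>w w'. (\<And>j. j \<noteq> i \<Longrightarrow> w j = w' j) \<Longrightarrow> h w = h w' \<and> a w = a w' \<and> c w = c w'"
  shows "(\<integral>\<^sup>+w. h w * ennreal ((cmod (a w + c w * w i))\<^sup>2) \<partial>PiM I (\<lambda>_. cgauss)) =
    (\<integral>\<^sup>+w. h w * ennreal ((cmod (a w))\<^sup>2 + (cmod (c w))\<^sup>2) \<partial>PiM I (\<lambda>_. cgauss))"
proof -
  let ?F = "\<lambda>(w, z). h w * ennreal ((cmod (a w + c w * z))\<^sup>2)"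
  have "(\<integral>\<^sup>+w. ?F (w, w i) \<partial>PiM I (\<lambda>_. cgauss)) = (\<integral>\<^sup>+w. \<integral>\<^sup>+z. ?F (w, z) \<partial>cgauss \<partial>PiM I (\<lambda>_. cgauss))"
  proof (rule cgauss.nn_integral_PiM_split_coordinate[OF assms(1,2)])
    fix w w' :: "'i \<Rightarrow> complex" and z
    assume "\<And>j. j \<noteq> i \<Longrightarrow> w j = w' j"
    then have "h w = h w' \<and> a w = a w' \<and> c w = c w'"
      by (rule indep)
    then show "?F (w, z) = ?F (w', z)"
      by simp
  qed simp
  then show ?thesis
    by (simp add: nn_integral_cmult nn_integral_cgauss_affine_norm_power2)
qed

lemma nn_integral_PiM_cgauss_linear_form:
  fixes h :: "('i \<Rightarrow> complex) \<Rightarrow> ennreal" and c :: "nat \<Rightarrow> ('i \<Rightarrow> complex) \<Rightarrow> complex"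
    and \<iota> :: "nat \<Rightarrow> 'i"
  assumes "finite I" "inj_on \<iota> {..<n}" "\<iota> ` {..<n} \<subseteq> I"
    and [measurable]: "h \<in> borel_measurable (PiM I (\<lambda>_. cgauss))" "\<And>k. c k \<in> borel_measurable (PiM I (\<lambda>_. cgauss))"
    and "\<And>w w'. (\<And>j. j \<notin> \<iota> ` {..<n} \<Longrightarrow> w j = w' j) \<Longrightarrow> h w = h w' \<and> (\<forall>k<n. c k w = c k w')"
  shows "(\<integral>\<^sup>+w. h w * ennreal ((cmod (\<Sum>k<n. c k w * w (\<iota> k)))\<^sup>2) \<partial>PiM I (\<lambda>_. cgauss)) =
    (\<integral>\<^sup>+w. h w * ennreal (\<Sum>k<n. (cmod (c k w))\<^sup>2) \<partial>PiM I (\<lambda>_. cgauss))"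
  using assms(2,3,6)
proof (induction n)
  case 0
  then show ?case by simp
next
  case (Suc n)
  let ?A = "\<lambda>w. \<Sum>k<n. c k w * w (\<iota> k)"
  have IH: "(\<integral>\<^sup>+w. h w * ennreal ((cmod (?A w))\<^sup>2) \<partial>PiM I (\<lambda>_. cgauss)) =
      (\<integral>\<^sup>+w. h w * ennreal (\<Sum>k<n. (cmod (c k w))\<^sup>2) \<partial>PiM I (\<lambda>_. cgauss))"
  proof (rule Suc.IH)
    show "inj_on \<iota> {..<n}" "\<iota> ` {..<n} \<subseteq> I"
      using Suc.prems(1,2) by (auto intro: inj_on_subset)
    fix w w' :: "'i \<Rightarrow> complex"
    assume eq: "\<And>j. j \<notin> \<iota> ` {..<n} \<Longrightarrow> w j = w' j"
    have "h w = h w' \<and> (\<forall>k<Suc n. c k w = c k w')"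
      by (rule Suc.prems(3), rule eq) auto
    then show "h w = h w' \<and> (\<forall>k<n. c k w = c k w')"
      by auto
  qed
  have "(\<integral>\<^sup>+w. h w * ennreal ((cmod (?A w + c n w * w (\<iota> n)))\<^sup>2) \<partial>PiM I (\<lambda>_. cgauss)) =
      (\<integral>\<^sup>+w. h w * ennreal ((cmod (?A w))\<^sup>2 + (cmod (c n w))\<^sup>2) \<partial>PiM I (\<lambda>_. cgauss))"
  proof (rule nn_integral_PiM_cgauss_affine_coordinate[OF assms(1)])
    show "\<iota> n \<in> I"
      using Suc.prems(2) by auto
    fix w w' :: "'i \<Rightarrow> complex"
    assume eq: "\<And>j. j \<noteq> \<iota> n \<Longrightarrow> w j = w' j"
    then have "h w = h w' \<and> (\<forall>k<Suc n. c k w = c k w')"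
      by (intro Suc.prems(3)) auto
    moreover have "w (\<iota> k) = w' (\<iota> k)" if "k < n" for k
      using that Suc.prems(1) by (intro eq) (auto dest: inj_onD)
    ultimately show "h w = h w' \<and> ?A w = ?A w' \<and> c n w = c n w'"
      by auto
  qed measurable
  also have "\<dots> = (\<integral>\<^sup>+w. h w * ennreal ((cmod (?A w))\<^sup>2) \<partial>PiM I (\<lambda>_. cgauss)) +
      (\<integral>\<^sup>+w. h w * ennreal ((cmod (c n w))\<^sup>2) \<partial>PiM I (\<lambda>_. cgauss))"
    by (simp add: distrib_left nn_integral_add)
  also have "\<dots> = (\<integral>\<^sup>+w. h w * ennreal (\<Sum>k<Suc n. (cmod (c k w))\<^sup>2) \<partial>PiM I (\<lambda>_. cgauss))"
    by (simp add: IH distrib_left nn_integral_add sum_nonneg)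
  finally show ?case
    by simp
qed

definition beam_power :: "nat \<Rightarrow> nat set \<Rightarrow> (nat \<Rightarrow> nat \<Rightarrow> complex) \<Rightarrow> (nat \<Rightarrow> complex) \<Rightarrow> real" where
  "beam_power N S G v = (\<Sum>m\<in>S. (cmod (\<Sum>n<N. G n m * v n))\<^sup>2)"

definition column_energy :: "nat \<Rightarrow> nat set \<Rightarrow> (nat \<Rightarrow> nat \<Rightarrow> complex) \<Rightarrow> real" where
  "column_energy N S G = (\<Sum>m\<in>S. \<Sum>n<N. (cmod (G n m))\<^sup>2)"

definition frobenius_gram :: "nat \<Rightarrow> nat \<Rightarrow> (nat \<Rightarrow> nat \<Rightarrow> complex) \<Rightarrow> real" where
  "frobenius_gram N K G = (\<Sum>a<N. \<Sum>b<N. (cmod (\<Sum>k<K. cnj (G a k) * G b k))\<^sup>2)"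

lemma beam_power_nonneg: "0 \<le> beam_power N S G v"
  by (simp add: beam_power_def sum_nonneg)

lemma column_energy_nonneg: "0 \<le> column_energy N S G"
  by (simp add: column_energy_def sum_nonneg)

lemma beam_power_split:
  assumes "K \<le> M"
  shows "beam_power N {..<M} G v = beam_power N {..<K} G v + beam_power N {K..<M} G v"
  using assms by (simp add: beam_power_def lessThan_atLeast0 sum.atLeastLessThan_concat)

lemma beam_power_le_column_energy:
  assumes "\<And>n. n < N \<Longrightarrow> cmod (v n) = 1"
  shows "beam_power N S G v \<le> real N * column_energy N S G"
proof -
  have "(cmod (\<Sum>n<N. G n m * v n))\<^sup>2 \<le> real N * (\<Sum>n<N. (cmod (G n m))\<^sup>2)" for m
  proof -
    have "cmod (\<Sum>n<N. G n m * v n) \<le> (\<Sum>n<N. cmod (G n m))"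
      using norm_sum[of "\<lambda>n. G n m * v n" "{..<N}"] assms by (simp add: norm_mult)
    then have "(cmod (\<Sum>n<N. G n m * v n))\<^sup>2 \<le> (\<Sum>n<N. cmod (G n m))\<^sup>2"
      by (simp add: power_mono)
    also have "\<dots> \<le> (\<Sum>n<N. (cmod (G n m))\<^sup>2) * real N"
      using sum_squared_le_sum_of_squares[of "\<lambda>n. cmod (G n m)" "{..<N}"] by simp
    finally show ?thesis
      by (simp add: mult.commute)
  qed
  then show ?thesis
    unfolding beam_power_def column_energy_def sum_distrib_left by (rule sum_mono)
qed

lemma beam_power_le_sum_norm_gram:
  assumes "\<And>n. n < N \<Longrightarrow> cmod (v n) = 1"
  shows "beam_power N {..<K} G v \<le> (\<Sum>a<N. \<Sum>b<N. cmod (\<Sum>k<K. cnj (G a k) * G b k))"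
proof -
  have "(cmod z)\<^sup>2 = Re (z * cnj z)" for z
    using arg_cong[OF complex_norm_square[of z], of Re] by simp
  then have "beam_power N {..<K} G v = Re (\<Sum>k<K. (\<Sum>a<N. G a k * v a) * cnj (\<Sum>b<N. G b k * v b))"
    by (simp only: beam_power_def Re_sum)
  also have "(\<Sum>k<K. (\<Sum>a<N. G a k * v a) * cnj (\<Sum>b<N. G b k * v b)) =
      (\<Sum>k<K. \<Sum>a<N. \<Sum>b<N. (v a * cnj (v b)) * (G a k * cnj (G b k)))"
    by (simp add: sum_product cnj_sum mult_ac)
  also have "\<dots> = (\<Sum>a<N. \<Sum>b<N. (v a * cnj (v b)) * (\<Sum>k<K. G a k * cnj (G b k)))"
    by (simp add: sum_distrib_left sum.swap[of _ "{..<K}"])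
  also have "Re \<dots> \<le> (\<Sum>a<N. \<Sum>b<N. cmod ((v a * cnj (v b)) * (\<Sum>k<K. G a k * cnj (G b k))))"
    by (rule order_trans[OF complex_Re_le_cmod order_trans[OF norm_sum sum_mono[OF norm_sum]]])
  also have "\<dots> = (\<Sum>a<N. \<Sum>b<N. cmod (cnj (\<Sum>k<K. cnj (G a k) * G b k)))"
    using assms by (simp add: norm_mult cnj_sum mult.commute)
  also have "\<dots> = (\<Sum>a<N. \<Sum>b<N. cmod (\<Sum>k<K. cnj (G a k) * G b k))"
    by (simp only: complex_mod_cnj)
  finally show ?thesis .
qed

lemma power2_sum_sum_le:
  fixes x :: "nat \<Rightarrow> nat \<Rightarrow> real"
  shows "(\<Sum>a<N. \<Sum>b<N. x a b)\<^sup>2 \<le> (real N)\<^sup>2 * (\<Sum>a<N. \<Sum>b<N. (x a b)\<^sup>2)"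
  using sum_squared_le_sum_of_squares[of "case_prod x" "{..<N} \<times> {..<N}"]
  by (simp add: sum.cartesian_product case_prod_beta mult.commute power2_eq_square)

lemma power2_beam_power_le_frobenius_gram:
  assumes "\<And>n. n < N \<Longrightarrow> cmod (v n) = 1"
  shows "(beam_power N {..<K} G v)\<^sup>2 \<le> (real N)\<^sup>2 * frobenius_gram N K G"
proof -
  have "(beam_power N {..<K} G v)\<^sup>2 \<le> (\<Sum>a<N. \<Sum>b<N. cmod (\<Sum>k<K. cnj (G a k) * G b k))\<^sup>2"
    using beam_power_le_sum_norm_gram[OF assms] by (simp add: beam_power_nonneg power_mono)
  also have "\<dots> \<le> (real N)\<^sup>2 * frobenius_gram N K G"
    unfolding frobenius_gram_def by (rule power2_sum_sum_le)
  finally show ?thesis .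
qed

lemma sum_lessThan_if_eq:
  fixes x y :: real
  assumes "a < N"
  shows "(\<Sum>b<N. if a = b then x else y) = x + (real N - 1) * y"
proof -
  have "(\<Sum>b<N. if a = b then x else y) = (\<Sum>b<N. y + (if a = b then x - y else 0))"
    by (intro sum.cong) auto
  then show ?thesis
    using assms by (simp add: sum.distrib algebra_simps)
qed

lemma sum_sum_lessThan_if_eq:
  fixes x y :: real
  shows "(\<Sum>a<N. \<Sum>b<N. if a = b then x else y) = real N * (x + (real N - 1) * y)"
proof -
  have "(\<Sum>a<N. \<Sum>b<N. if a = b then x else y) = (\<Sum>a<N. x + (real N - 1) * y)"
    by (rule sum.cong) (simp_all add: sum_lessThan_if_eq)
  then show ?thesis
    by simp
qed

lemma norm_sum_cnj_mult_self: "cmod (\<Sum>k<K. cnj (z k) * z k) = (\<Sum>k<K. (cmod (z k))\<^sup>2)"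
proof -
  have "cnj u * u = complex_of_real ((cmod u)\<^sup>2)" for u
    by (metis complex_norm_square mult.commute)
  then have "(\<Sum>k<K. cnj (z k) * z k) = complex_of_real (\<Sum>k<K. (cmod (z k))\<^sup>2)"
    by (simp only: of_real_sum)
  then show ?thesis
    by (simp add: sum_nonneg del: of_real_power of_real_sum)
qed

lemma nn_integral_PiM_cgauss_gram_diagonal:
  fixes \<iota> :: "nat \<Rightarrow> 'i"
  assumes "finite I" "inj_on \<iota> {..<K}" "\<iota> ` {..<K} \<subseteq> I"
  shows "(\<integral>\<^sup>+w. ennreal ((cmod (\<Sum>k<K. cnj (w (\<iota> k)) * w (\<iota> k)))\<^sup>2) \<partial>PiM I (\<lambda>_. cgauss)) =
    ennreal (real K * (real K + 1))"
proof -
  have \<iota>: "\<iota> k \<in> I" "\<iota> k = \<iota> l \<longleftrightarrow> k = l" if "k < K" "l < K" for k l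
    using assms(2,3) that by (auto dest: inj_onD)
  have "(cmod (\<Sum>k<K. cnj (w (\<iota> k)) * w (\<iota> k)))\<^sup>2 = (\<Sum>k<K. \<Sum>l<K. (cmod (w (\<iota> k)))\<^sup>2 * (cmod (w (\<iota> l)))\<^sup>2)"
    for w :: "'i \<Rightarrow> complex"
    by (simp only: norm_sum_cnj_mult_self power2_eq_square[of "\<Sum>k<K. (cmod (w (\<iota> k)))\<^sup>2"] sum_product)
  then have "(\<integral>\<^sup>+w. ennreal ((cmod (\<Sum>k<K. cnj (w (\<iota> k)) * w (\<iota> k)))\<^sup>2) \<partial>PiM I (\<lambda>_. cgauss)) =
      (\<Sum>k<K. \<Sum>l<K. \<integral>\<^sup>+w. ennreal ((cmod (w (\<iota> k)))\<^sup>2 * (cmod (w (\<iota> l)))\<^sup>2) \<partial>PiM I (\<lambda>_. cgauss))"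
    by (simp add: nn_integral_sum_ennreal sum_nonneg)
  also have "\<dots> = (\<Sum>k<K. \<Sum>l<K. ennreal (if k = l then 2 else 1))"
    using \<iota> by (intro sum.cong refl) (simp add: nn_integral_PiM_cgauss_norm_power2_mult assms(1))
  also have "\<dots> = ennreal (\<Sum>k<K. \<Sum>l<K. if k = l then 2 else 1)"
    by (simp add: sum_nonneg)
  also have "(\<Sum>k<K. \<Sum>l<K. if k = l then 2 else 1) = real K * (real K + 1)"
    by (simp only: sum_sum_lessThan_if_eq) (simp add: algebra_simps)
  finally show ?thesis .
qed

lemma nn_integral_PiM_cgauss_gram_off_diagonal:
  fixes \<iota> \<iota>' :: "nat \<Rightarrow> 'i"
  assumes "finite I" "inj_on \<iota>' {..<K}" "\<iota> ` {..<K} \<subseteq> I" "\<iota>' ` {..<K} \<subseteq> I" "\<iota> ` {..<K} \<inter> \<iota>' ` {..<K} = {}"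
  shows "(\<integral>\<^sup>+w. ennreal ((cmod (\<Sum>k<K. cnj (w (\<iota> k)) * w (\<iota>' k)))\<^sup>2) \<partial>PiM I (\<lambda>_. cgauss)) = ennreal (real K)"
proof -
  have "(\<integral>\<^sup>+w. 1 * ennreal ((cmod (\<Sum>k<K. cnj (w (\<iota> k)) * w (\<iota>' k)))\<^sup>2) \<partial>PiM I (\<lambda>_. cgauss)) =
      (\<integral>\<^sup>+w. 1 * ennreal (\<Sum>k<K. (cmod (cnj (w (\<iota> k))))\<^sup>2) \<partial>PiM I (\<lambda>_. cgauss))"
  proof (rule nn_integral_PiM_cgauss_linear_form[OF assms(1,2,4)])
    fix w w' :: "'i \<Rightarrow> complex"
    assume eq: "\<And>j. j \<notin> \<iota>' ` {..<K} \<Longrightarrow> w j = w' j"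
    have "w (\<iota> k) = w' (\<iota> k)" if "k < K" for k
      using that assms(5) by (intro eq) auto
    then show "1 = 1 \<and> (\<forall>k<K. cnj (w (\<iota> k)) = cnj (w' (\<iota> k)))"
      by simp
  qed simp_all
  also have "\<dots> = (\<Sum>k<K. \<integral>\<^sup>+w. ennreal ((cmod (w (\<iota> k)))\<^sup>2) \<partial>PiM I (\<lambda>_. cgauss))"
    by (simp add: nn_integral_sum_ennreal)
  also have "\<dots> = ennreal (real K)"
    using assms(3) by (simp add: nn_integral_PiM_cgauss_norm_power2 assms(1) ennreal_of_nat_eq_real_of_nat image_subset_iff)
  finally show ?thesis
    by simp
qed

lemma nn_integral_PiM_cgauss_frobenius_gram:
  fixes \<iota> :: "nat \<Rightarrow> nat \<Rightarrow> 'i"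
  assumes "finite I" "inj_on (case_prod \<iota>) ({..<N} \<times> {..<K})" "case_prod \<iota> ` ({..<N} \<times> {..<K}) \<subseteq> I"
  shows "(\<integral>\<^sup>+w. ennreal (frobenius_gram N K (\<lambda>a k. w (\<iota> a k))) \<partial>PiM I (\<lambda>_. cgauss)) =
    ennreal (real N * real K * (real N + real K))"
proof -
  have \<iota>: "inj_on (\<iota> a) {..<K}" "\<iota> a ` {..<K} \<subseteq> I" "a \<noteq> b \<Longrightarrow> \<iota> a ` {..<K} \<inter> \<iota> b ` {..<K} = {}"
    if "a < N" "b < N" for a b
    using assms(2,3) that by (auto simp: inj_on_def)
  have "(\<integral>\<^sup>+w. ennreal (frobenius_gram N K (\<lambda>a k. w (\<iota> a k))) \<partial>PiM I (\<lambda>_. cgauss)) =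
      (\<Sum>a<N. \<Sum>b<N. \<integral>\<^sup>+w. ennreal ((cmod (\<Sum>k<K. cnj (w (\<iota> a k)) * w (\<iota> b k)))\<^sup>2) \<partial>PiM I (\<lambda>_. cgauss))"
    unfolding frobenius_gram_def by (simp add: nn_integral_sum_ennreal sum_nonneg)
  also have "\<dots> = (\<Sum>a<N. \<Sum>b<N. ennreal (if a = b then real K * (real K + 1) else real K))"
    using \<iota> by (intro sum.cong refl)
      (simp add: nn_integral_PiM_cgauss_gram_diagonal nn_integral_PiM_cgauss_gram_off_diagonal assms(1))
  also have "\<dots> = ennreal (\<Sum>a<N. \<Sum>b<N. if a = b then real K * (real K + 1) else real K)"
    by (simp add: sum_nonneg)
  also have "(\<Sum>a<N. \<Sum>b<N. if a = b then real K * (real K + 1) else real K) = real N * real K * (real N + real K)"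
    by (simp only: sum_sum_lessThan_if_eq) (simp add: algebra_simps)
  finally show ?thesis .
qed

definition gt_index :: "nat \<Rightarrow> nat \<Rightarrow> nat \<Rightarrow> nat \<times> nat \<times> nat" where
  "gt_index K m n = (if m < K then (0, n, m) else (1, n, m - K))"

definition gr_index :: "nat \<Rightarrow> nat \<Rightarrow> nat \<Rightarrow> nat \<times> nat \<times> nat" where
  "gr_index K m n = (if m < K then (0, n, m) else (2, m - K, n))"

lemma Gt_eq: "Gt K w n m = w (gt_index K m n)"
  by (simp add: Gt_def gt_index_def)

lemma Gr_eq: "Gr K w m n = w (gr_index K m n)"
  by (simp add: Gr_def gr_index_def)

lemma gt_index_eq_gr_index: "m < K \<Longrightarrow> gt_index K m = gr_index K m"
  by (simp add: fun_eq_iff gt_index_def gr_index_def)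

lemma gt_index_0: "0 < K \<Longrightarrow> gt_index K 0 = (\<lambda>n. (0, n, 0))"
  by (simp add: fun_eq_iff gt_index_def)

lemma inj_on_gt_index: "inj_on (gt_index K m) A"
  by (simp add: inj_on_def gt_index_def)

lemma inj_on_gr_index: "inj_on (gr_index K m) A"
  by (simp add: inj_on_def gr_index_def)

lemma gt_index_subset_chan_index: "m < Mt \<Longrightarrow> gt_index (min Mt Mr) m ` {..<N} \<subseteq> chan_index N Mt Mr"
  by (auto simp: gt_index_def chan_index_def)

lemma gr_index_subset_chan_index: "m < Mr \<Longrightarrow> gr_index (min Mt Mr) m ` {..<N} \<subseteq> chan_index N Mt Mr"
  by (auto simp: gr_index_def chan_index_def)

lemma gt_index_disjoint_gr_index:
  "\<not> (m = m' \<and> m < K) \<Longrightarrow> gt_index K m ` A \<inter> gr_index K m' ` B = {}"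
  by (auto simp: gt_index_def gr_index_def split: if_splits)

lemma gt_index_disjoint_column_0: "0 < m \<Longrightarrow> gt_index K m ` A \<inter> (\<lambda>n. (0, n, 0)) ` B = {}"
  by (auto simp: gt_index_def split: if_splits)

lemma gr_index_disjoint_column_0: "0 < m \<Longrightarrow> gr_index K m ` A \<inter> (\<lambda>n. (0, n, 0)) ` B = {}"
  by (auto simp: gr_index_def split: if_splits)

lemma gain_obj_eq_beam_power:
  "gain_obj d lam N Mt Mr \<theta> w \<phi> =
    beam_power N {..<Mt} (Gt (min Mt Mr) w) (\<lambda>n. exp (\<i> * complex_of_real (\<phi> n)) * steer d lam N \<theta> n) *
    beam_power N {..<Mr} (\<lambda>n m. Gr (min Mt Mr) w m n) (\<lambda>n. exp (\<i> * complex_of_real (\<phi> n)) * steer d lam N \<theta> n)"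
  by (simp add: gain_obj_def beam_power_def Let_def)

lemma unimodular_phased_steer: "cmod (exp (\<i> * complex_of_real (\<phi> n)) * steer d lam N \<theta> n) = 1"
  by (simp add: steer_def norm_mult norm_exp_i_times)

lemma ex_phases_phased_steer_eq:
  assumes "\<And>n. cmod (u n) = 1"
  shows "\<exists>\<phi>. \<forall>n. exp (\<i> * complex_of_real (\<phi> n)) * steer d lam N \<theta> n = u n"
proof
  let ?s = "\<lambda>n. pi * (2 * (real n + 1) - real N - 1) * d * sin \<theta> / lam"
  show "\<forall>n. exp (\<i> * complex_of_real (Arg (u n) - ?s n)) * steer d lam N \<theta> n = u n"
  proof
    fix n
    have "u n \<noteq> 0"
      using assms[of n] by (metis norm_zero zero_neq_one)
    then have "cis (Arg (u n)) = u n"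
      by (simp add: cis_Arg sgn_div_norm assms)
    then show "exp (\<i> * complex_of_real (Arg (u n) - ?s n)) * steer d lam N \<theta> n = u n"
      by (simp add: steer_def cis_conv_exp algebra_simps flip: exp_add)
  qed
qed

section \<open>Upper bound\<close>

definition gain_bound :: "nat \<Rightarrow> nat \<Rightarrow> nat \<Rightarrow> (nat \<times> nat \<times> nat \<Rightarrow> complex) \<Rightarrow> real" where
  "gain_bound N Mt Mr w = (real N)\<^sup>2 *
    (frobenius_gram N (min Mt Mr) (Gt (min Mt Mr) w) +
     column_energy N {..<min Mt Mr} (Gt (min Mt Mr) w) *
       (column_energy N {min Mt Mr..<Mt} (Gt (min Mt Mr) w) +
        column_energy N {min Mt Mr..<Mr} (\<lambda>n m. Gr (min Mt Mr) w m n)))"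

lemma beam_gain_le_gain_bound:
  assumes "\<And>n. n < N \<Longrightarrow> cmod (v n) = 1"
  shows "beam_power N {..<Mt} (Gt (min Mt Mr) w) v * beam_power N {..<Mr} (\<lambda>n m. Gr (min Mt Mr) w m n) v
    \<le> gain_bound N Mt Mr w"
proof -
  define K where "K = min Mt Mr"
  define X where "X = beam_power N {..<K} (Gt K w) v"
  define Y where "Y = beam_power N {K..<Mt} (Gt K w) v"
  define Z where "Z = beam_power N {K..<Mr} (\<lambda>n m. Gr K w m n) v"
  define P where "P = column_energy N {..<K} (Gt K w)"
  define B where "B = column_energy N {K..<Mt} (Gt K w)"
  define C where "C = column_energy N {K..<Mr} (\<lambda>n m. Gr K w m n)"
  have "beam_power N {..<K} (\<lambda>n m. Gr K w m n) v = X"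
    by (simp add: X_def beam_power_def Gt_def Gr_def)
  then have gain: "beam_power N {..<Mt} (Gt K w) v * beam_power N {..<Mr} (\<lambda>n m. Gr K w m n) v = (X + Y) * (X + Z)"
    unfolding X_def Y_def Z_def by (simp add: beam_power_split[of K Mt] beam_power_split[of K Mr] K_def)
  have "Y = 0 \<or> Z = 0"
    by (cases "Mt \<le> Mr") (simp_all add: Y_def Z_def K_def beam_power_def min_def)
  then have "(X + Y) * (X + Z) = X\<^sup>2 + X * (Y + Z)"
    by (auto simp: algebra_simps power2_eq_square)
  also have "X\<^sup>2 \<le> (real N)\<^sup>2 * frobenius_gram N K (Gt K w)"
    unfolding X_def using assms by (rule power2_beam_power_le_frobenius_gram)
  also have "X * (Y + Z) \<le> (real N * P) * (real N * B + real N * C)"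
    unfolding X_def Y_def Z_def P_def B_def C_def using assms
    by (intro mult_mono add_mono beam_power_le_column_energy add_nonneg_nonneg beam_power_nonneg)
      (simp_all add: column_energy_nonneg)
  also have "(real N)\<^sup>2 * frobenius_gram N K (Gt K w) + (real N * P) * (real N * B + real N * C) =
      gain_bound N Mt Mr w"
    by (simp add: gain_bound_def K_def P_def B_def C_def power2_eq_square algebra_simps)
  finally show ?thesis
    using gain by (simp add: K_def)
qed

lemma gain_obj_le_gain_bound: "gain_obj d lam N Mt Mr \<theta> w \<phi> \<le> gain_bound N Mt Mr w"
  unfolding gain_obj_eq_beam_power by (rule beam_gain_le_gain_bound) (rule unimodular_phased_steer)

lemma gamma1_star_le_gain_bound: "gamma1_star d lam N Mt Mr \<theta> w \<le> gain_bound N Mt Mr w"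
  unfolding gamma1_star_def by (rule cSUP_least) (simp_all add: gain_obj_le_gain_bound)

lemma gain_bound_eq:
  "gain_bound N Mt Mr w = (real N)\<^sup>2 *
    (frobenius_gram N (min Mt Mr) (\<lambda>a k. w (0, a, k)) +
     column_energy N {..<min Mt Mr} (\<lambda>n m. w (0, n, m)) *
       (column_energy N {min Mt Mr..<Mt} (\<lambda>n m. w (1, n, m - min Mt Mr)) +
        column_energy N {min Mt Mr..<Mr} (\<lambda>n m. w (2, m - min Mt Mr, n))))"
  unfolding gain_bound_def frobenius_gram_def column_energy_def Gt_def Gr_def
  by (intro arg_cong2[where f="(*)"] arg_cong2[where f="(+)"] refl sum.cong) auto

lemma column_energy_eq_sum_product:
  "column_energy N S (\<lambda>n m. w (\<kappa> m n)) = (\<Sum>p\<in>S \<times> {..<N}. (cmod (w (case_prod \<kappa> p)))\<^sup>2)"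
  by (simp add: column_energy_def sum.cartesian_product case_prod_beta)

lemma nn_integral_column_energy_mult_block:
  fixes c :: nat and \<kappa> :: "nat \<Rightarrow> nat \<Rightarrow> nat \<times> nat \<times> nat"
  assumes "finite I" "finite S" "\<And>m n. m \<in> S \<Longrightarrow> n < N \<Longrightarrow> \<kappa> m n \<in> I"
    and "\<And>m n. m \<in> S \<Longrightarrow> n < N \<Longrightarrow> fst (\<kappa> m n) \<noteq> 0"
    and "\<And>n m. n < N \<Longrightarrow> m < K \<Longrightarrow> (0, n, m) \<in> I"
  shows "(\<integral>\<^sup>+w. ennreal (column_energy N {..<K} (\<lambda>n m. w (0, n, m)) * column_energy N S (\<lambda>n m. w (\<kappa> m n)))
      \<partial>PiM I (\<lambda>_. cgauss)) = ennreal (real K * real N * (real (card S) * real N))"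
proof -
  have energy_0: "column_energy N {..<K} (\<lambda>n m. w (0, n, m)) = (\<Sum>p\<in>{..<K} \<times> {..<N}. (cmod (w (0, snd p, fst p)))\<^sup>2)"
    for w :: "nat \<times> nat \<times> nat \<Rightarrow> complex"
    using column_energy_eq_sum_product[of N "{..<K}" w "\<lambda>m n. (0, n, m)"] by (simp add: case_prod_beta)
  have "(\<integral>\<^sup>+w. ennreal (column_energy N {..<K} (\<lambda>n m. w (0, n, m))) \<partial>PiM I (\<lambda>_. cgauss)) = of_nat (K * N)"
    using nn_integral_PiM_cgauss_mult_sum_norm_power2[OF assms(1), of "{..<K} \<times> {..<N}" "\<lambda>p. (0, snd p, fst p)" "\<lambda>_. 1"]
      assms(5) by (simp add: energy_0 image_subset_iff)
  moreover have "(\<integral>\<^sup>+w. ennreal (column_energy N {..<K} (\<lambda>n m. w (0, n, m)) * column_energy N S (\<lambda>n m. w (\<kappa> m n)))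
      \<partial>PiM I (\<lambda>_. cgauss)) =
      of_nat (card (S \<times> {..<N})) * (\<integral>\<^sup>+w. ennreal (column_energy N {..<K} (\<lambda>n m. w (0, n, m))) \<partial>PiM I (\<lambda>_. cgauss))"
    unfolding column_energy_eq_sum_product[of N S]
  proof (rule nn_integral_PiM_cgauss_mult_sum_norm_power2)
    fix p and w w' :: "nat \<times> nat \<times> nat \<Rightarrow> complex"
    assume p: "p \<in> S \<times> {..<N}" and eq: "\<And>j. j \<noteq> case_prod \<kappa> p \<Longrightarrow> w j = w' j"
    have "w (0, n, m) = w' (0, n, m)" for n m
      using assms(4)[of "fst p" "snd p"] p by (intro eq) (auto simp: case_prod_beta dest: sym)
    then show "column_energy N {..<K} (\<lambda>n m. w (0, n, m)) = column_energy N {..<K} (\<lambda>n m. w' (0, n, m))"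
      by (simp add: column_energy_def)
  qed (use assms(1-3) in \<open>auto simp: column_energy_def sum_nonneg\<close>)
  ultimately show ?thesis
    by (simp add: card_cartesian_product ennreal_of_nat_eq_real_of_nat ennreal_mult algebra_simps)
qed

lemma nn_integral_gain_bound:
  fixes N Mt Mr :: nat
  defines "K \<equiv> min Mt Mr"
  shows "(\<integral>\<^sup>+w. ennreal (gain_bound N Mt Mr w) \<partial>chan_space N Mt Mr) =
    ennreal ((real N)\<^sup>2 * (real N * real K * (real N + real K) +
      real K * real N * (real (Mt - K) * real N) + real K * real N * (real (Mr - K) * real N)))"
proof -
  define P where "P = (\<lambda>w :: nat \<times> nat \<times> nat \<Rightarrow> complex. column_energy N {..<K} (\<lambda>n m. w (0, n, m)))"
  define B where "B = (\<lambda>w :: nat \<times> nat \<times> nat \<Rightarrow> complex. column_energy N {K..<Mt} (\<lambda>n m. w (1, n, m - K)))"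
  define C where "C = (\<lambda>w :: nat \<times> nat \<times> nat \<Rightarrow> complex. column_energy N {K..<Mr} (\<lambda>n m. w (2, m - K, n)))"
  define Q where "Q = (\<lambda>w :: nat \<times> nat \<times> nat \<Rightarrow> complex. frobenius_gram N K (\<lambda>a k. w (0, a, k)))"
  have fin: "finite (chan_index N Mt Mr)"
    by (simp add: chan_index_def)
  have [measurable]: "P \<in> borel_measurable (chan_space N Mt Mr)" "B \<in> borel_measurable (chan_space N Mt Mr)"
    "C \<in> borel_measurable (chan_space N Mt Mr)" "Q \<in> borel_measurable (chan_space N Mt Mr)"
    by (simp_all add: chan_space_def P_def B_def C_def Q_def column_energy_def frobenius_gram_def)
  have "(\<integral>\<^sup>+w. ennreal (gain_bound N Mt Mr w) \<partial>chan_space N Mt Mr) =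
      (\<integral>\<^sup>+w. ennreal ((real N)\<^sup>2) * ennreal (Q w) + ennreal ((real N)\<^sup>2) * ennreal (P w * B w) +
        ennreal ((real N)\<^sup>2) * ennreal (P w * C w) \<partial>chan_space N Mt Mr)"
    by (intro nn_integral_cong)
      (simp add: gain_bound_eq P_def B_def C_def Q_def K_def column_energy_nonneg frobenius_gram_def
        sum_nonneg algebra_simps flip: ennreal_mult ennreal_plus)
  also have "\<dots> = ennreal ((real N)\<^sup>2) * (\<integral>\<^sup>+w. ennreal (Q w) \<partial>chan_space N Mt Mr) +
      ennreal ((real N)\<^sup>2) * (\<integral>\<^sup>+w. ennreal (P w * B w) \<partial>chan_space N Mt Mr) +
      ennreal ((real N)\<^sup>2) * (\<integral>\<^sup>+w. ennreal (P w * C w) \<partial>chan_space N Mt Mr)"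
    by (simp add: nn_integral_add nn_integral_cmult)
  also have "(\<integral>\<^sup>+w. ennreal (Q w) \<partial>chan_space N Mt Mr) = ennreal (real N * real K * (real N + real K))"
    unfolding chan_space_def Q_def using fin
    by (intro nn_integral_PiM_cgauss_frobenius_gram) (auto simp: inj_on_def chan_index_def K_def)
  also have "(\<integral>\<^sup>+w. ennreal (P w * B w) \<partial>chan_space N Mt Mr) = ennreal (real K * real N * (real (Mt - K) * real N))"
    unfolding chan_space_def P_def B_def using fin
    by (subst nn_integral_column_energy_mult_block[where \<kappa>="\<lambda>m n. (1, n, m - K)"])
      (auto simp: chan_index_def K_def)
  also have "(\<integral>\<^sup>+w. ennreal (P w * C w) \<partial>chan_space N Mt Mr) = ennreal (real K * real N * (real (Mr - K) * real N))"
    unfolding chan_space_def P_def C_def using fin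
    by (subst nn_integral_column_energy_mult_block[where \<kappa>="\<lambda>m n. (2, m - K, n)"])
      (auto simp: chan_index_def K_def)
  finally show ?thesis
    by (simp add: ennreal_mult ennreal_plus distrib_left)
qed

text \<open>Here the evenness of \<open>N\<close> enters, only through \<open>N \<ge> 2\<close>: the slack is
  \<open>N\<^sup>3 K ((K - 1) (N/2 - 1) + 1)\<close>.\<close>
lemma gain_bound_expectation_le:
  fixes n k a b :: real
  assumes "2 \<le> n" "1 \<le> k"
  shows "n\<^sup>2 * (n * k * (n + k) + k * n * ((a - k) * n) + k * n * ((b - k) * n))
    \<le> n\<^sup>2 * ((a + b + (1 - 3 * k) / 2) * k * n\<^sup>2 + 2 * k * n)"
proof -
  have "n\<^sup>2 * ((a + b + (1 - 3 * k) / 2) * k * n\<^sup>2 + 2 * k * n) -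
      n\<^sup>2 * (n * k * (n + k) + k * n * ((a - k) * n) + k * n * ((b - k) * n)) =
      n ^ 3 * k * ((k - 1) * (n / 2 - 1) + 1)"
    by (simp add: field_simps power2_eq_square power3_eq_cube)
  moreover have "0 \<le> n ^ 3 * k * ((k - 1) * (n / 2 - 1) + 1)"
    using assms by (intro mult_nonneg_nonneg) auto
  ultimately show ?thesis
    by linarith
qed

lemma nn_integral_gamma1_star_le:
  assumes "0 < N" "even N" "0 < Mt" "0 < Mr"
  shows "(\<integral>\<^sup>+ w. ennreal (gamma1_star d lam N Mt Mr \<theta> w) \<partial>chan_space N Mt Mr)
    \<le> ennreal ((real N)\<^sup>2 * ((real Mt + real Mr + (1 - 3 * real (min Mt Mr)) / 2)
      * real (min Mt Mr) * (real N)\<^sup>2 + 2 * real (min Mt Mr) * real N))"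
proof -
  have "2 \<le> real N"
    using assms(1,2) by (auto elim!: evenE)
  moreover have "1 \<le> real (min Mt Mr)"
    using assms(3,4) by simp
  ultimately have bound: "(real N)\<^sup>2 * (real N * real (min Mt Mr) * (real N + real (min Mt Mr)) +
      real (min Mt Mr) * real N * (real (Mt - min Mt Mr) * real N) +
      real (min Mt Mr) * real N * (real (Mr - min Mt Mr) * real N))
    \<le> (real N)\<^sup>2 * ((real Mt + real Mr + (1 - 3 * real (min Mt Mr)) / 2) * real (min Mt Mr) * (real N)\<^sup>2 +
      2 * real (min Mt Mr) * real N)"
    by (simp add: of_nat_diff gain_bound_expectation_le)
  have "(\<integral>\<^sup>+ w. ennreal (gamma1_star d lam N Mt Mr \<theta> w) \<partial>chan_space N Mt Mr)
      \<le> (\<integral>\<^sup>+ w. ennreal (gain_bound N Mt Mr w) \<partial>chan_space N Mt Mr)"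
    by (intro nn_integral_mono ennreal_leI gamma1_star_le_gain_bound)
  also have "\<dots> \<le> ennreal ((real N)\<^sup>2 * ((real Mt + real Mr + (1 - 3 * real (min Mt Mr)) / 2)
      * real (min Mt Mr) * (real N)\<^sup>2 + 2 * real (min Mt Mr) * real N))"
    unfolding nn_integral_gain_bound using bound by (rule ennreal_leI)
  finally show ?thesis .
qed

section \<open>Lower bound\<close>

lemma gain_obj_le_gamma1_star: "gain_obj d lam N Mt Mr \<theta> w \<phi> \<le> gamma1_star d lam N Mt Mr \<theta> w"
  unfolding gamma1_star_def by (rule cSUP_upper[OF UNIV_I], rule bdd_aboveI2, rule gain_obj_le_gain_bound)

lemma beam_gain_le_gamma1_star:
  assumes "\<And>n. cmod (u n) = 1"
  shows "beam_power N {..<Mt} (Gt (min Mt Mr) w) u * beam_power N {..<Mr} (\<lambda>n m. Gr (min Mt Mr) w m n) u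
    \<le> gamma1_star d lam N Mt Mr \<theta> w"
proof -
  obtain \<phi> where \<phi>: "\<And>n. exp (\<i> * complex_of_real (\<phi> n)) * steer d lam N \<theta> n = u n"
    using ex_phases_phased_steer_eq[of u, OF assms] by blast
  show ?thesis
    using gain_obj_le_gamma1_star[of d lam N Mt Mr \<theta> w \<phi>] by (simp only: gain_obj_eq_beam_power \<phi>)
qed

definition phase_align :: "complex \<Rightarrow> complex" where
  "phase_align z = (if z = 0 then 1 else cnj z / complex_of_real (cmod z))"

lemma norm_phase_align [simp]: "cmod (phase_align z) = 1"
  by (simp add: phase_align_def norm_divide)

lemma mult_phase_align: "z * phase_align z = complex_of_real (cmod z)"
proof (cases "z = 0")
  case False
  then have "cmod z \<noteq> 0"
    by simp
  then show ?thesis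
    using complex_norm_square[of z] by (simp add: phase_align_def field_simps power2_eq_square flip: of_real_mult)
qed (simp add: phase_align_def)

lemma borel_measurable_phase_align [measurable]: "phase_align \<in> borel_measurable borel"
  unfolding phase_align_def by measurable

definition aligned_power :: "nat \<Rightarrow> (nat \<Rightarrow> 'i) \<Rightarrow> (nat \<Rightarrow> 'i) \<Rightarrow> ('i \<Rightarrow> complex) \<Rightarrow> real" where
  "aligned_power N \<rho> \<kappa> w = (cmod (\<Sum>n<N. w (\<kappa> n) * phase_align (w (\<rho> n))))\<^sup>2"

lemma aligned_power_nonneg: "0 \<le> aligned_power N \<rho> \<kappa> w"
  by (simp add: aligned_power_def)

lemma borel_measurable_aligned_power [measurable]:
  "aligned_power N \<rho> \<kappa> \<in> borel_measurable (PiM I (\<lambda>_. cgauss))"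
  unfolding aligned_power_def[abs_def] by measurable

lemma aligned_power_self: "aligned_power N \<rho> \<rho> w = (\<Sum>n<N. cmod (w (\<rho> n)))\<^sup>2"
proof -
  have "(\<Sum>n<N. w (\<rho> n) * phase_align (w (\<rho> n))) = complex_of_real (\<Sum>n<N. cmod (w (\<rho> n)))"
    by (simp add: mult_phase_align)
  then show ?thesis
    by (simp add: aligned_power_def abs_of_nonneg sum_nonneg del: of_real_sum)
qed

lemma aligned_power_cong:
  assumes "\<And>n. n < N \<Longrightarrow> w (\<kappa> n) = w' (\<kappa> n)" "\<And>n. n < N \<Longrightarrow> w (\<rho> n) = w' (\<rho> n)"
  shows "aligned_power N \<rho> \<kappa> w = aligned_power N \<rho> \<kappa> w'"
proof -
  have "(\<Sum>n<N. w (\<kappa> n) * phase_align (w (\<rho> n))) = (\<Sum>n<N. w' (\<kappa> n) * phase_align (w' (\<rho> n)))"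
    by (rule sum.cong) (simp_all add: assms)
  then show ?thesis
    by (simp add: aligned_power_def)
qed

text \<open>The weights \<open>phase_align (w (\<rho> n))\<close> depend only on the reference coordinates, so
  against the fresh coordinates \<open>w (\<kappa> n)\<close> they act as fixed unit numbers.\<close>
lemma nn_integral_mult_aligned_power:
  fixes h :: "('i \<Rightarrow> complex) \<Rightarrow> real"
  assumes "finite I" "inj_on \<kappa> {..<N}" "\<kappa> ` {..<N} \<subseteq> I" "\<kappa> ` {..<N} \<inter> \<rho> ` {..<N} = {}"
    and [measurable]: "h \<in> borel_measurable (PiM I (\<lambda>_. cgauss))" and "\<And>w. 0 \<le> h w"
    and indep: "\<And>w w'. (\<And>j. j \<notin> \<kappa> ` {..<N} \<Longrightarrow> w j = w' j) \<Longrightarrow> h w = h w'"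
  shows "(\<integral>\<^sup>+w. ennreal (h w * aligned_power N \<rho> \<kappa> w) \<partial>PiM I (\<lambda>_. cgauss)) =
    ennreal (real N) * (\<integral>\<^sup>+w. ennreal (h w) \<partial>PiM I (\<lambda>_. cgauss))"
proof -
  have "(\<integral>\<^sup>+w. ennreal (h w * aligned_power N \<rho> \<kappa> w) \<partial>PiM I (\<lambda>_. cgauss)) =
      (\<integral>\<^sup>+w. ennreal (h w) * ennreal ((cmod (\<Sum>n<N. phase_align (w (\<rho> n)) * w (\<kappa> n)))\<^sup>2) \<partial>PiM I (\<lambda>_. cgauss))"
    using assms(6) by (simp add: aligned_power_def ennreal_mult mult.commute)
  also have "\<dots> = (\<integral>\<^sup>+w. ennreal (h w) * ennreal (\<Sum>n<N. (cmod (phase_align (w (\<rho> n))))\<^sup>2) \<partial>PiM I (\<lambda>_. cgauss))"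
  proof (rule nn_integral_PiM_cgauss_linear_form[OF assms(1-3)])
    fix w w' :: "'i \<Rightarrow> complex"
    assume eq: "\<And>j. j \<notin> \<kappa> ` {..<N} \<Longrightarrow> w j = w' j"
    then have "h w = h w'"
      by (rule indep)
    moreover have "w (\<rho> n) = w' (\<rho> n)" if "n < N" for n
      using that assms(4) by (intro eq) auto
    ultimately show "ennreal (h w) = ennreal (h w') \<and> (\<forall>n<N. phase_align (w (\<rho> n)) = phase_align (w' (\<rho> n)))"
      by simp
  qed simp_all
  also have "\<dots> = (\<integral>\<^sup>+w. ennreal (h w) * ennreal (real N) \<partial>PiM I (\<lambda>_. cgauss))"
    by simp
  also have "\<dots> = ennreal (real N) * (\<integral>\<^sup>+w. ennreal (h w) \<partial>PiM I (\<lambda>_. cgauss))"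
    by (subst nn_integral_multc) (simp_all add: mult.commute)
  finally show ?thesis .
qed

lemma nn_integral_aligned_power_fresh:
  assumes "finite I" "inj_on \<kappa> {..<N}" "\<kappa> ` {..<N} \<subseteq> I" "\<kappa> ` {..<N} \<inter> \<rho> ` {..<N} = {}"
  shows "(\<integral>\<^sup>+w. ennreal (aligned_power N \<rho> \<kappa> w) \<partial>PiM I (\<lambda>_. cgauss)) = ennreal (real N)"
  using nn_integral_mult_aligned_power[OF assms, of "\<lambda>_. 1"] by simp

lemma nn_integral_aligned_power_self:
  assumes "finite I" "inj_on \<rho> {..<N}" "\<rho> ` {..<N} \<subseteq> I"
  shows "(\<integral>\<^sup>+w. ennreal (aligned_power N \<rho> \<rho> w) \<partial>PiM I (\<lambda>_. cgauss)) =
    ennreal (real N * (pi * (real N - 1) / 4 + 1))"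
proof -
  have \<rho>: "\<rho> a = \<rho> b \<longleftrightarrow> a = b" if "a < N" "b < N" for a b
    using assms(2) that by (auto dest: inj_onD)
  have "(\<integral>\<^sup>+w. ennreal (aligned_power N \<rho> \<rho> w) \<partial>PiM I (\<lambda>_. cgauss)) =
      (\<Sum>a<N. \<Sum>b<N. \<integral>\<^sup>+w. ennreal (cmod (w (\<rho> a)) * cmod (w (\<rho> b))) \<partial>PiM I (\<lambda>_. cgauss))"
    by (simp add: aligned_power_self power2_eq_square sum_product nn_integral_sum_ennreal sum_nonneg)
  also have "\<dots> = (\<Sum>a<N. \<Sum>b<N. ennreal (if a = b then 1 else pi / 4))"
    using assms(1,3) by (intro sum.cong refl) (auto simp: nn_integral_PiM_cgauss_norm_mult \<rho> image_subset_iff)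
  also have "\<dots> = ennreal (\<Sum>a<N. \<Sum>b<N. if a = b then 1 else pi / 4)"
    by (simp add: sum_nonneg)
  also have "(\<Sum>a<N. \<Sum>b<N. if a = b then 1 else pi / 4) = real N * (pi * (real N - 1) / 4 + 1)"
    by (simp only: sum_sum_lessThan_if_eq) (simp add: algebra_simps)
  finally show ?thesis .
qed

text \<open>Co-phased powers are positively correlated: either they coincide (Cauchy-Schwarz) or the
  second one uses fresh coordinates (independence).\<close>
lemma nn_integral_aligned_power_mult_ge:
  fixes \<rho> \<kappa> \<kappa>' :: "nat \<Rightarrow> 'i"
  assumes "finite I" "inj_on \<kappa>' {..<N}" "\<kappa>' ` {..<N} \<subseteq> I"
    and "\<kappa> = \<kappa>' \<or> \<kappa>' ` {..<N} \<inter> (\<kappa> ` {..<N} \<union> \<rho> ` {..<N}) = {}"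
  shows "(\<integral>\<^sup>+w. ennreal (aligned_power N \<rho> \<kappa> w) \<partial>PiM I (\<lambda>_. cgauss)) *
      (\<integral>\<^sup>+w. ennreal (aligned_power N \<rho> \<kappa>' w) \<partial>PiM I (\<lambda>_. cgauss))
    \<le> (\<integral>\<^sup>+w. ennreal (aligned_power N \<rho> \<kappa> w * aligned_power N \<rho> \<kappa>' w) \<partial>PiM I (\<lambda>_. cgauss))"
  using assms(4)
proof
  assume "\<kappa> = \<kappa>'"
  then show ?thesis
    using prob_space.power2_nn_integral_le[OF prob_space_PiM_cgauss, of "\<lambda>w. ennreal (aligned_power N \<rho> \<kappa>' w)" I]
    by (simp add: power2_eq_square ennreal_mult' aligned_power_nonneg)
next
  assume fresh: "\<kappa>' ` {..<N} \<inter> (\<kappa> ` {..<N} \<union> \<rho> ` {..<N}) = {}"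
  have "(\<integral>\<^sup>+w. ennreal (aligned_power N \<rho> \<kappa> w * aligned_power N \<rho> \<kappa>' w) \<partial>PiM I (\<lambda>_. cgauss)) =
      ennreal (real N) * (\<integral>\<^sup>+w. ennreal (aligned_power N \<rho> \<kappa> w) \<partial>PiM I (\<lambda>_. cgauss))"
  proof (rule nn_integral_mult_aligned_power[OF assms(1-3)])
    show "\<kappa>' ` {..<N} \<inter> \<rho> ` {..<N} = {}"
      using fresh by blast
    fix w w' :: "'i \<Rightarrow> complex"
    assume eq: "\<And>j. j \<notin> \<kappa>' ` {..<N} \<Longrightarrow> w j = w' j"
    show "aligned_power N \<rho> \<kappa> w = aligned_power N \<rho> \<kappa> w'"
      using fresh by (intro aligned_power_cong eq) auto
  qed (simp_all add: aligned_power_nonneg)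
  moreover have "(\<integral>\<^sup>+w. ennreal (aligned_power N \<rho> \<kappa>' w) \<partial>PiM I (\<lambda>_. cgauss)) = ennreal (real N)"
    using fresh by (intro nn_integral_aligned_power_fresh assms(1-3)) blast
  ultimately show ?thesis
    by (simp add: mult.commute)
qed

lemma beam_power_phase_align_eq:
  "beam_power N S (Gt K w) (\<lambda>n. phase_align (w (0, n, 0))) =
    (\<Sum>m\<in>S. aligned_power N (\<lambda>n. (0, n, 0)) (gt_index K m) w)"
  "beam_power N S (\<lambda>n m. Gr K w m n) (\<lambda>n. phase_align (w (0, n, 0))) =
    (\<Sum>m\<in>S. aligned_power N (\<lambda>n. (0, n, 0)) (gr_index K m) w)"
  by (simp_all add: beam_power_def aligned_power_def Gt_eq Gr_eq)

definition mean_beam_power :: "nat \<Rightarrow> nat \<Rightarrow> real" where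
  "mean_beam_power N m = (if m = 0 then real N * (pi * (real N - 1) / 4 + 1) else real N)"

lemma mean_beam_power_nonneg: "0 \<le> mean_beam_power N m"
  by (cases N) (simp_all add: mean_beam_power_def)

lemma sum_mean_beam_power: "0 < M \<Longrightarrow> (\<Sum>m<M. mean_beam_power N m) = real N * (pi * (real N - 1) / 4 + real M)"
  using sum_lessThan_if_eq[of 0 M "real N * (pi * (real N - 1) / 4 + 1)" "real N"]
  by (simp add: mean_beam_power_def algebra_simps)

lemma nn_integral_aligned_power_chan_index:
  assumes "0 < min Mt Mr"
    and "\<kappa> = gt_index (min Mt Mr) m \<and> m < Mt \<or> \<kappa> = gr_index (min Mt Mr) m \<and> m < Mr"
  shows "(\<integral>\<^sup>+w. ennreal (aligned_power N (\<lambda>n. (0, n, 0)) \<kappa> w) \<partial>chan_space N Mt Mr) =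
    ennreal (mean_beam_power N m)"
proof -
  have fin: "finite (chan_index N Mt Mr)"
    by (simp add: chan_index_def)
  show ?thesis
  proof (cases "m = 0")
    case True
    then have "\<kappa> = (\<lambda>n. (0, n, 0))"
      using assms by (auto simp: gt_index_0 gt_index_eq_gr_index[symmetric])
    moreover have "(\<lambda>n. (0::nat, n, 0::nat)) ` {..<N} \<subseteq> chan_index N Mt Mr"
      using assms(1) by (auto simp: chan_index_def)
    ultimately show ?thesis
      unfolding chan_space_def using True fin
      by (simp add: nn_integral_aligned_power_self inj_on_def mean_beam_power_def)
  next
    case False
    have "inj_on \<kappa> {..<N} \<and> \<kappa> ` {..<N} \<subseteq> chan_index N Mt Mr \<and>
        \<kappa> ` {..<N} \<inter> (\<lambda>n. (0, n, 0)) ` {..<N} = {}"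
      using assms(2) False
      by (elim disjE conjE) (simp_all add: inj_on_gt_index inj_on_gr_index gt_index_subset_chan_index
          gr_index_subset_chan_index gt_index_disjoint_column_0 gr_index_disjoint_column_0 del: image_subset_iff)
    then show ?thesis
      unfolding chan_space_def using False by (simp add: nn_integral_aligned_power_fresh[OF fin] mean_beam_power_def)
  qed
qed

lemma nn_integral_aligned_power_pair_ge:
  assumes "0 < min Mt Mr" "m < Mt" "m' < Mr"
  shows "(\<integral>\<^sup>+w. ennreal (aligned_power N (\<lambda>n. (0, n, 0)) (gt_index (min Mt Mr) m) w) \<partial>chan_space N Mt Mr) *
      (\<integral>\<^sup>+w. ennreal (aligned_power N (\<lambda>n. (0, n, 0)) (gr_index (min Mt Mr) m') w) \<partial>chan_space N Mt Mr)
    \<le> (\<integral>\<^sup>+w. ennreal (aligned_power N (\<lambda>n. (0, n, 0)) (gt_index (min Mt Mr) m) w *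
        aligned_power N (\<lambda>n. (0, n, 0)) (gr_index (min Mt Mr) m') w) \<partial>chan_space N Mt Mr)"
proof -
  have fin: "finite (chan_index N Mt Mr)"
    by (simp add: chan_index_def)
  consider "m = m'" "m < min Mt Mr" | "\<not> (m = m' \<and> m < min Mt Mr)" "0 < m'"
    | "\<not> (m = m' \<and> m < min Mt Mr)" "m' = 0" "0 < m"
    using assms(1) by fastforce
  then show ?thesis
  proof cases
    case 1
    then show ?thesis
      unfolding chan_space_def using assms(2)
      by (intro nn_integral_aligned_power_mult_ge[OF fin])
        (simp_all add: gt_index_eq_gr_index inj_on_gr_index gr_index_subset_chan_index)
  next
    case 2
    then show ?thesis
      unfolding chan_space_def using assms(3)
      by (intro nn_integral_aligned_power_mult_ge[OF fin])
        (simp_all add: inj_on_gr_index gr_index_subset_chan_index Int_Un_distrib gr_index_disjoint_column_0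
          gt_index_disjoint_gr_index[THEN Int_commute[THEN trans]])
  next
    case 3
    then show ?thesis
      unfolding chan_space_def
      using nn_integral_aligned_power_mult_ge[OF fin inj_on_gt_index gt_index_subset_chan_index[OF assms(2)],
          of "gr_index (min Mt Mr) m'" "\<lambda>n. (0, n, 0)"]
      by (simp add: mult.commute Int_Un_distrib gt_index_disjoint_gr_index gt_index_disjoint_column_0)
  qed
qed

lemma nn_integral_cophased_beam_gain_ge:
  assumes "0 < min Mt Mr"
  shows "ennreal ((\<Sum>m<Mt. mean_beam_power N m) * (\<Sum>m<Mr. mean_beam_power N m))
    \<le> (\<integral>\<^sup>+w. ennreal (beam_power N {..<Mt} (Gt (min Mt Mr) w) (\<lambda>n. phase_align (w (0, n, 0))) *
        beam_power N {..<Mr} (\<lambda>n m. Gr (min Mt Mr) w m n) (\<lambda>n. phase_align (w (0, n, 0)))) \<partial>chan_space N Mt Mr)"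
proof -
  define T where "T m = aligned_power N (\<lambda>n. (0, n, 0)) (gt_index (min Mt Mr) m)" for m
  define R where "R m = aligned_power N (\<lambda>n. (0, n, 0)) (gr_index (min Mt Mr) m)" for m
  have [measurable]: "T m \<in> borel_measurable (chan_space N Mt Mr)" "R m \<in> borel_measurable (chan_space N Mt Mr)" for m
    by (simp_all add: T_def R_def chan_space_def)
  have TR_nonneg: "0 \<le> T m w" "0 \<le> R m w" for m w
    by (simp_all add: T_def R_def aligned_power_nonneg)
  have "ennreal ((\<Sum>m<Mt. mean_beam_power N m) * (\<Sum>m<Mr. mean_beam_power N m)) =
      (\<Sum>m<Mt. \<Sum>m'<Mr. ennreal (mean_beam_power N m) * ennreal (mean_beam_power N m'))"
    by (simp add: mean_beam_power_nonneg sum_nonneg ennreal_mult sum_product flip: sum_ennreal)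
  also have "\<dots> \<le> (\<Sum>m<Mt. \<Sum>m'<Mr. \<integral>\<^sup>+w. ennreal (T m w * R m' w) \<partial>chan_space N Mt Mr)"
  proof (intro sum_mono)
    fix m m'
    assume "m \<in> {..<Mt}" "m' \<in> {..<Mr}"
    then show "ennreal (mean_beam_power N m) * ennreal (mean_beam_power N m') \<le>
        (\<integral>\<^sup>+w. ennreal (T m w * R m' w) \<partial>chan_space N Mt Mr)"
      using nn_integral_aligned_power_pair_ge[OF assms, of m m' N]
        nn_integral_aligned_power_chan_index[OF assms, of "gt_index (min Mt Mr) m" m N]
        nn_integral_aligned_power_chan_index[OF assms, of "gr_index (min Mt Mr) m'" m' N]
      by (simp add: T_def R_def)
  qed
  also have "\<dots> = (\<integral>\<^sup>+w. ennreal ((\<Sum>m<Mt. T m w) * (\<Sum>m'<Mr. R m' w)) \<partial>chan_space N Mt Mr)"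
    by (simp add: sum_product nn_integral_sum_ennreal TR_nonneg sum_nonneg)
  finally show ?thesis
    by (simp add: beam_power_phase_align_eq T_def R_def)
qed

lemma nn_integral_gamma1_star_ge:
  assumes "0 < Mt" "0 < Mr"
  shows "ennreal ((real N)\<^sup>2 * (pi * (real N - 1) / 4 + real (min Mt Mr)) * (pi * (real N - 1) / 4 + real (max Mt Mr)))
    \<le> (\<integral>\<^sup>+w. ennreal (gamma1_star d lam N Mt Mr \<theta> w) \<partial>chan_space N Mt Mr)"
proof -
  have "ennreal ((real N)\<^sup>2 * (pi * (real N - 1) / 4 + real (min Mt Mr)) * (pi * (real N - 1) / 4 + real (max Mt Mr)))
      = ennreal ((\<Sum>m<Mt. mean_beam_power N m) * (\<Sum>m<Mr. mean_beam_power N m))"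
    using assms by (simp add: sum_mean_beam_power power2_eq_square min_def max_def mult_ac)
  also have "\<dots> \<le> (\<integral>\<^sup>+w. ennreal (beam_power N {..<Mt} (Gt (min Mt Mr) w) (\<lambda>n. phase_align (w (0, n, 0))) *
      beam_power N {..<Mr} (\<lambda>n m. Gr (min Mt Mr) w m n) (\<lambda>n. phase_align (w (0, n, 0)))) \<partial>chan_space N Mt Mr)"
    using assms by (intro nn_integral_cophased_beam_gain_ge) simp
  also have "\<dots> \<le> (\<integral>\<^sup>+w. ennreal (gamma1_star d lam N Mt Mr \<theta> w) \<partial>chan_space N Mt Mr)"
    by (intro nn_integral_mono ennreal_leI beam_gain_le_gamma1_star norm_phase_align)
  finally show ?thesis .
qed

theorem proposition3:
  fixes d lam \<theta> :: real and N Mt Mr :: nat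
  assumes "d > 0" and "lam > 0"
    and "N > 0" and "even N" and "Mt > 0" and "Mr > 0"
  shows "ennreal ((real N)\<^sup>2 * (pi * (real N - 1) / 4 + real (min Mt Mr))
                             * (pi * (real N - 1) / 4 + real (max Mt Mr)))
           \<le> (\<integral>\<^sup>+ w. ennreal (gamma1_star d lam N Mt Mr \<theta> w) \<partial>chan_space N Mt Mr)
       \<and> (\<integral>\<^sup>+ w. ennreal (gamma1_star d lam N Mt Mr \<theta> w) \<partial>chan_space N Mt Mr)
           \<le> ennreal ((real N)\<^sup>2 * ((real Mt + real Mr + (1 - 3 * real (min Mt Mr)) / 2)
                             * real (min Mt Mr) * (real N)\<^sup>2 + 2 * real (min Mt Mr) * real N))"
  using nn_integral_gamma1_star_ge[OF \<open>Mt > 0\<close> \<open>Mr > 0\<close>]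
    nn_integral_gamma1_star_le[OF \<open>N > 0\<close> \<open>even N\<close> \<open>Mt > 0\<close> \<open>Mr > 0\<close>]
  by blast

end
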